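(* Let $T$ be an ergodic automorphism of a standard probability Borel space $(X,\mathcal{B},\mu)$ with $\mu$ non-atomic, and let $f\in L^2(X,\mu)$ with $f\ge c$ for some $c>0$. Suppose there are measurable sets $W_n\subset X$, increasing sequences of natural numbers $\{q_n\}$, $\{q_n'\}$, real sequences $\{a_n\}$, $\{a_n'\}$, a number $0<\alpha\le 1$ and $P\in\mathcal{P}(\mathbb{R}^2)$ such that: (C1) $\mu(W_n)\to\alpha$; (C2) $\mu(W_n\triangle T^{-1}W_n)\to 0$; (C3) $\{q_n\}$ is a rigidity sequence for $T$ along $\{W_n\}$; (C4) $\{q_n'\}$ is a rigidity sequence for $T$ along $\{W_n\}$; (C5) $\{\int_{W_n}|f_n|^2d\mu\}_n$ is bounded, where $f_n=f^{(q_n)}-a_n$; (C6) $\{\int_{W_n}|f_n'|^2d\mu\}_n$ is bounded, where $f_n'=f^{(q_n')}-a_n'$; (C7) $(f_n',f_n)_*(\mu_{W_n})\to P$ weakly in $\mathcal{P}(\mathbb{R}^2)$. Let $h,h':X\to\mathbb{R}$ be measurable, $g\in L^\infty(X,\mathcal{B},\mu)$ and $\phi:\mathbb{R}^2\to\mathbb{R}$ bounded and uniformly continuous. Then \[\int_{W_n}\phi\big(f_n'(x)+h'(x),f_n(x)+h(x)\big)g(x)\,d\mu(x)\to\alpha\int_X\int_{\mathbb{R}^2}\phi\big(t+h'(x),u+h(x)\big)g(x)\,dP(t,u)\,d\mu(x).\]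
   Context: For $n\in\mathbb{Z}$: $f^{(n)}=f+f\circ T+\cdots+f\circ T^{n-1}$ for $n>0$, $f^{(0)}=0$, $f^{(n)}=-(f\circ T^{-1}+\cdots+f\circ T^{n})$ for $n<0$. $\mu_W(A)=\mu(A\cap W)/\mu(W)$ is the conditional measure. $\{q_n\}$ is a rigidity sequence for $T$ along $\{W_n\}$ if $\mu((T^{-q_n}A\triangle A)\cap W_n)\to 0$ for all $A\in\mathcal{B}$. $\mathcal{P}(\mathbb{R}^k)$ is the space of Borel probability measures on $\mathbb{R}^k$. *)

theory Defs
  imports "HOL-Probability.Probability"
begin

definition standard_borel_prob :: "'a::polish_space measure \<Rightarrow> bool" where
  "standard_borel_prob M \<longleftrightarrow> prob_space M \<and> sets M = sets (borel :: 'a measure)"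

definition is_atom :: "'a measure \<Rightarrow> 'a set \<Rightarrow> bool" where
  "is_atom M A \<longleftrightarrow> A \<in> sets M \<and> emeasure M A > 0 \<and>
     (\<forall>B\<in>sets M. B \<subseteq> A \<longrightarrow> emeasure M B = 0 \<or> emeasure M B = emeasure M A)"

definition non_atomic :: "'a measure \<Rightarrow> bool" where
  "non_atomic M \<longleftrightarrow> (\<nexists>A. is_atom M A)"

definition mp_automorphism :: "'a measure \<Rightarrow> ('a \<Rightarrow> 'a) \<Rightarrow> bool" where
  "mp_automorphism M T \<longleftrightarrow> bij_betw T (space M) (space M) \<and>
     T \<in> measurable M M \<and> the_inv_into (space M) T \<in> measurable M M \<and>
     (\<forall>A\<in>sets M. emeasure M (T -` A \<inter> space M) = emeasure M A)"

definition ergodic :: "'a measure \<Rightarrow> ('a \<Rightarrow> 'a) \<Rightarrow> bool" where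
  "ergodic M T \<longleftrightarrow> (\<forall>A\<in>sets M. T -` A \<inter> space M = A \<longrightarrow>
      emeasure M A = 0 \<or> emeasure M A = emeasure M (space M))"

definition birkhoff_sum :: "('a \<Rightarrow> 'a) \<Rightarrow> ('a \<Rightarrow> real) \<Rightarrow> nat \<Rightarrow> 'a \<Rightarrow> real" where
  "birkhoff_sum T f n x = (\<Sum>i<n. f ((T ^^ i) x))"

definition symdiff :: "'a set \<Rightarrow> 'a set \<Rightarrow> 'a set" where
  "symdiff A B = (A - B) \<union> (B - A)"

definition rigidity_along :: "'a measure \<Rightarrow> ('a \<Rightarrow> 'a) \<Rightarrow> (nat \<Rightarrow> nat) \<Rightarrow> (nat \<Rightarrow> 'a set) \<Rightarrow> bool" where
  "rigidity_along M T q W \<longleftrightarrow> (\<forall>A\<in>sets M.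
     (\<lambda>n. measure M (symdiff ((T ^^ q n) -` A \<inter> space M) A \<inter> W n)) \<longlonglongrightarrow> 0)"

definition cond_measure :: "'a measure \<Rightarrow> 'a set \<Rightarrow> 'a measure" where
  "cond_measure M W = uniform_measure M W"

definition weak_conv_measures :: "(nat \<Rightarrow> 'b::metric_space measure) \<Rightarrow> 'b measure \<Rightarrow> bool" where
  "weak_conv_measures Ps P \<longleftrightarrow> (\<forall>\<phi>::'b \<Rightarrow> real. continuous_on UNIV \<phi> \<longrightarrow> bounded (range \<phi>) \<longrightarrow>
     (\<lambda>n. \<integral>x. \<phi> x \<partial>(Ps n)) \<longlonglongrightarrow> (\<integral>x. \<phi> x \<partial>P))"

end

(*
  Write F n = (f_n', f_n) and consider the functionals u \<mapsto> \<integral>_{W_n} \<psi>(F n) u for a bounded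
  uniformly continuous \<psi>.  They are positive and bounded by a multiple of the L^1 norm, and they
  are asymptotically T-invariant: W_n is almost invariant, and on W_n the map T changes F n by
  (f \<circ> T^{q_n'} - f, f \<circ> T^{q_n} - f), which is small in measure by rigidity.  Any cluster point of
  these functionals (in the compact product topology) is therefore a T-invariant positive
  functional given by a density, which by ergodicity is constant; its value on 1 is
  \<alpha> \<integral>\<psi> dP by (C7).  Since every subsequence has such a cluster point, the functionals converge.
  Applying this to \<psi>(t, u) = \<phi>(t + c', u + c) on the level sets of a simple approximation of
  (h', h), and using the uniform continuity of \<phi>, gives the theorem.
*)

theory Submission
  imports Defs
begin

lemma integrable_bounded_mult:
  fixes u v :: "'a \<Rightarrow> real"
  assumes u: "u \<in> borel_measurable M" and u_bound: "\<And>x. x \<in> space M \<Longrightarrow> \<bar>u x\<bar> \<le> C"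
    and v: "integrable M v"
  shows "integrable M (\<lambda>x. u x * v x)"
proof (rule Bochner_Integration.integrable_bound[where f="\<lambda>x. C * \<bar>v x\<bar>"])
  show "(\<lambda>x. u x * v x) \<in> borel_measurable M"
    using u borel_measurable_integrable[OF v] by measurable
  show "AE x in M. norm (u x * v x) \<le> norm (C * \<bar>v x\<bar>)"
  proof (intro AE_I2)
    fix x assume "x \<in> space M"
    then have "\<bar>u x\<bar> \<le> \<bar>C\<bar>" using u_bound by fastforce
    then show "norm (u x * v x) \<le> norm (C * \<bar>v x\<bar>)" by (simp add: abs_mult mult_right_mono)
  qed
qed (use v in simp)

section \<open>Measure-preserving automorphisms and ergodicity\<close>

lemma mp_automorphism_measurable: "mp_automorphism M T \<Longrightarrow> T \<in> measurable M M"
  by (simp add: mp_automorphism_def)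

lemma mp_automorphism_distr:
  assumes "mp_automorphism M T"
  shows "distr M M T = M"
proof (rule measure_eqI)
  fix A assume "A \<in> sets (distr M M T)"
  then show "emeasure (distr M M T) A = emeasure M A"
    using assms by (simp add: mp_automorphism_def emeasure_distr)
qed simp

lemma measurable_funpow: "T \<in> measurable M M \<Longrightarrow> (T ^^ n) \<in> measurable M M"
  by (induction n) (auto intro: measurable_comp)

lemma mp_automorphism_distr_funpow:
  assumes aut: "mp_automorphism M T"
  shows "distr M M (T ^^ n) = M"
proof (induction n)
  case 0
  then show ?case by (simp add: distr_id2[OF refl] id_def)
next
  case (Suc n)
  have T: "T \<in> measurable M M" by (rule mp_automorphism_measurable[OF aut])
  have "distr M M (T ^^ Suc n) = distr (distr M M (T ^^ n)) M T"
    by (simp add: distr_distr[OF T measurable_funpow[OF T]])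
  also have "\<dots> = M"
    by (simp add: Suc mp_automorphism_distr[OF aut])
  finally show ?case .
qed

lemma mp_automorphism_integral_comp:
  fixes u :: "'a \<Rightarrow> real"
  assumes "mp_automorphism M T" and "u \<in> borel_measurable M"
  shows "(\<integral>x. u (T x) \<partial>M) = (\<integral>x. u x \<partial>M)"
  using integral_distr[OF mp_automorphism_measurable[OF assms(1)] assms(2)]
  by (simp add: mp_automorphism_distr[OF assms(1)])

text \<open>An almost invariant set differs from the strictly invariant set of points whose orbit
  eventually stays in it by a null set.\<close>
lemma ergodic_AE_invariant_set:
  assumes aut: "mp_automorphism M T" and erg: "ergodic M T"
    and E[measurable]: "E \<in> sets M" and inv: "AE x in M. T x \<in> E \<longleftrightarrow> x \<in> E"
  shows "emeasure M E = 0 \<or> emeasure M E = emeasure M (space M)"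
proof -
  have T[measurable]: "T \<in> measurable M M" by (rule mp_automorphism_measurable[OF aut])
  have Tn[measurable]: "(T ^^ n) \<in> measurable M M" for n by (rule measurable_funpow[OF T])
  have "AE x in M. (T ^^ n) x \<in> E \<longleftrightarrow> x \<in> E" for n
  proof (induction n)
    case (Suc n)
    have "AE x in distr M M (T ^^ n). T x \<in> E \<longleftrightarrow> x \<in> E"
      by (subst mp_automorphism_distr_funpow[OF aut]) (rule inv)
    then have "AE x in M. T ((T ^^ n) x) \<in> E \<longleftrightarrow> (T ^^ n) x \<in> E"
      by (simp add: AE_distr_iff)
    with Suc show ?case by eventually_elim simp
  qed simp
  then have orbit: "AE x in M. \<forall>n. (T ^^ n) x \<in> E \<longleftrightarrow> x \<in> E"
    by (simp add: AE_all_countable)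
  define E' where "E' = {x \<in> space M. \<exists>k. \<forall>n\<ge>k. (T ^^ n) x \<in> E}"
  have E'[measurable]: "E' \<in> sets M" unfolding E'_def by measurable
  have shift: "(\<forall>n\<ge>k. (T ^^ n) (T x) \<in> E) \<longleftrightarrow> (\<forall>n\<ge>Suc k. (T ^^ n) x \<in> E)" for k x
    by (metis Suc_le_D Suc_le_mono funpow_Suc_right o_apply)
  have "T -` E' \<inter> space M = E'"
  proof -
    have "(\<exists>k. \<forall>n\<ge>k. (T ^^ n) (T x) \<in> E) \<longleftrightarrow> (\<exists>k. \<forall>n\<ge>k. (T ^^ n) x \<in> E)" for x
      unfolding shift by (metis le_SucI not_less_eq_eq)
    then show ?thesis
      using measurable_space[OF T] unfolding E'_def by auto
  qed
  then have "emeasure M E' = 0 \<or> emeasure M E' = emeasure M (space M)"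
    using erg by (simp add: ergodic_def)
  moreover have "emeasure M E' = emeasure M E"
  proof (rule emeasure_eq_AE)
    show "AE x in M. x \<in> E' \<longleftrightarrow> x \<in> E"
      using orbit AE_space
    proof eventually_elim
      case (elim x)
      then show ?case unfolding E'_def by blast
    qed
  qed simp_all
  ultimately show ?thesis by simp
qed

lemma ergodic_AE_invariant_le_integral:
  fixes \<rho> :: "'a \<Rightarrow> real"
  assumes "prob_space M" and aut: "mp_automorphism M T" and erg: "ergodic M T"
    and int: "integrable M \<rho>" and inv: "AE x in M. \<rho> (T x) = \<rho> x"
  shows "AE x in M. \<rho> x \<le> (\<integral>x. \<rho> x \<partial>M)"
proof -
  interpret prob_space M by fact
  have T[measurable]: "T \<in> measurable M M" by (rule mp_automorphism_measurable[OF aut])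
  have [measurable]: "\<rho> \<in> borel_measurable M" using int by auto
  define E where "E = {x \<in> space M. (\<integral>x. \<rho> x \<partial>M) < \<rho> x}"
  have E[measurable]: "E \<in> sets M" unfolding E_def by measurable
  have "AE x in M. T x \<in> E \<longleftrightarrow> x \<in> E"
    using inv AE_space by eventually_elim (use measurable_space[OF T] in \<open>auto simp: E_def\<close>)
  then have "emeasure M E = 0 \<or> emeasure M E = emeasure M (space M)"
    by (rule ergodic_AE_invariant_set[OF aut erg E])
  moreover have "emeasure M E \<noteq> emeasure M (space M)"
  proof
    assume "emeasure M E = emeasure M (space M)"
    then have "emeasure M (space M - E) = 0" by (simp add: emeasure_compl)
    then have AE_E: "AE x in M. x \<in> E" by (intro AE_I[of _ _ "space M - E"]) auto
    then have "AE x in M. 0 \<le> \<rho> x - (\<integral>x. \<rho> x \<partial>M)"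
      by eventually_elim (auto simp: E_def)
    moreover have "(\<integral>x. \<rho> x - (\<integral>x. \<rho> x \<partial>M) \<partial>M) = 0"
      using int by (simp add: prob_space)
    ultimately have "AE x in M. \<rho> x - (\<integral>x. \<rho> x \<partial>M) = 0"
      using integral_nonneg_eq_0_iff_AE[of M "\<lambda>x. \<rho> x - (\<integral>x. \<rho> x \<partial>M)"] int by simp
    with AE_E have "AE x in M. False" by eventually_elim (auto simp: E_def)
    then show False by simp
  qed
  ultimately have "emeasure M E = 0" by blast
  then have "AE x in M. x \<notin> E" by (intro AE_I[of _ _ E]) auto
  then show ?thesis
    using AE_space by eventually_elim (auto simp: E_def not_less)
qed

lemma ergodic_AE_invariant_const:
  fixes \<rho> :: "'a \<Rightarrow> real"
  assumes "prob_space M" and aut: "mp_automorphism M T" and erg: "ergodic M T"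
    and int: "integrable M \<rho>" and inv: "AE x in M. \<rho> (T x) = \<rho> x"
  shows "AE x in M. \<rho> x = (\<integral>x. \<rho> x \<partial>M)"
proof -
  have "AE x in M. \<rho> x \<le> (\<integral>x. \<rho> x \<partial>M)"
    by (rule ergodic_AE_invariant_le_integral[OF assms])
  moreover have "AE x in M. - \<rho> x \<le> (\<integral>x. - \<rho> x \<partial>M)"
    using int inv by (intro ergodic_AE_invariant_le_integral[OF assms(1-3)]) auto
  ultimately show ?thesis by eventually_elim simp
qed

lemma ergodic_invariant_density_const:
  fixes \<rho> :: "'a \<Rightarrow> real"
  assumes "prob_space M" and aut: "mp_automorphism M T" and erg: "ergodic M T"
    and int: "integrable M \<rho>"
    and inv: "\<And>A. A \<in> sets M \<Longrightarrow> (\<integral>x\<in>T -` A \<inter> space M. \<rho> x \<partial>M) = (\<integral>x\<in>A. \<rho> x \<partial>M)"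
  shows "AE x in M. \<rho> x = (\<integral>x. \<rho> x \<partial>M)"
proof (rule ergodic_AE_invariant_const[OF assms(1-4)])
  have T[measurable]: "T \<in> measurable M M" by (rule mp_automorphism_measurable[OF aut])
  have [measurable]: "the_inv_into (space M) T \<in> measurable M M"
    using aut by (simp add: mp_automorphism_def)
  have bij: "bij_betw T (space M) (space M)" using aut by (simp add: mp_automorphism_def)
  have [measurable]: "\<rho> \<in> borel_measurable M" using int by auto
  have "integrable (distr M M T) \<rho>"
    using int by (simp add: mp_automorphism_distr[OF aut])
  then have int_T: "integrable M (\<lambda>x. \<rho> (T x))"
    by (simp add: integrable_distr_eq)
  show "AE x in M. \<rho> (T x) = \<rho> x"
  proof (rule density_unique_real[OF int_T int])
    fix B assume B[measurable]: "B \<in> sets M"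
    \<comment> \<open>\<open>A = T ` B\<close>, so that \<open>B\<close> is the preimage of \<open>A\<close>\<close>
    define A where "A = the_inv_into (space M) T -` B \<inter> space M"
    have A[measurable]: "A \<in> sets M" unfolding A_def by measurable
    have TA: "T x \<in> A \<longleftrightarrow> x \<in> B" if "x \<in> space M" for x
      using that measurable_space[OF T] bij by (auto simp: A_def bij_betw_def the_inv_into_f_f)
    have "(\<integral>x\<in>B. \<rho> (T x) \<partial>M) = (\<integral>x. indicator A (T x) * \<rho> (T x) \<partial>M)"
      unfolding set_lebesgue_integral_def
      by (rule Bochner_Integration.integral_cong) (auto simp: TA indicator_def)
    also have "\<dots> = (\<integral>y. indicator A y * \<rho> y \<partial>M)"
      by (rule mp_automorphism_integral_comp[OF aut]) measurable
    also have "\<dots> = (\<integral>x\<in>T -` A \<inter> space M. \<rho> x \<partial>M)"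
      using inv[OF A] by (simp add: set_lebesgue_integral_def mult.commute)
    also have "T -` A \<inter> space M = B"
      using TA sets.sets_into_space[OF B] by auto
    finally show "(\<integral>x\<in>B. \<rho> (T x) \<partial>M) = (\<integral>x\<in>B. \<rho> x \<partial>M)" .
  qed
qed

section \<open>Invariant positive functionals\<close>

lemma bounded_functional_eq_integral:
  fixes \<Lambda> :: "('a \<Rightarrow> real) \<Rightarrow> real"
  assumes add: "\<And>u v. integrable M u \<Longrightarrow> integrable M v \<Longrightarrow> \<Lambda> (\<lambda>x. u x + v x) = \<Lambda> u + \<Lambda> v"
    and scale: "\<And>u c. integrable M u \<Longrightarrow> \<Lambda> (\<lambda>x. c * u x) = c * \<Lambda> u"
    and bound: "\<And>u. integrable M u \<Longrightarrow> \<bar>\<Lambda> u\<bar> \<le> C * (\<integral>x. \<bar>u x\<bar> \<partial>M)"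
    and indicator: "\<And>A. A \<in> sets M \<Longrightarrow> emeasure M A < \<infinity> \<Longrightarrow> \<Lambda> (indicator A) = \<beta> * measure M A"
    and k: "integrable M k"
  shows "\<Lambda> k = \<beta> * (\<integral>x. k x \<partial>M)"
  using k
proof (induct rule: integrable_induct)
  case (base A c)
  then have "\<Lambda> (\<lambda>x. c * indicator A x) = c * \<Lambda> (indicator A)"
    by (intro scale) auto
  with base show ?case by (simp add: indicator mult.commute)
next
  case (add u v)
  then show ?case by (simp add: assms(1) distrib_left)
next
  case (lim f s)
  have diff: "\<Lambda> (\<lambda>x. u x - v x) = \<Lambda> u - \<Lambda> v" if "integrable M u" "integrable M v" for u v
    using add[of "\<lambda>x. u x - v x" v] that by simp
  have [measurable]: "f \<in> borel_measurable M" "\<And>i. s i \<in> borel_measurable M"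
    using lim by auto
  have "(\<lambda>i. \<integral>x. \<bar>s i x - f x\<bar> \<partial>M) \<longlonglongrightarrow> (\<integral>x. 0 \<partial>M)"
  proof (rule integral_dominated_convergence[where w="\<lambda>x. 3 * \<bar>f x\<bar>"])
    show "AE x in M. (\<lambda>i. \<bar>s i x - f x\<bar>) \<longlonglongrightarrow> 0"
      using lim(3) by (intro AE_I2 tendsto_rabs_zero LIM_zero)
    show "AE x in M. norm \<bar>s i x - f x\<bar> \<le> 3 * \<bar>f x\<bar>" for i
      using lim(4)[of _ i] by (intro AE_I2) fastforce
  qed (use lim(5) in simp_all)
  then have L1: "(\<lambda>i. C * (\<integral>x. \<bar>s i x - f x\<bar> \<partial>M)) \<longlonglongrightarrow> 0"
    using tendsto_mult_right_zero by auto
  have "\<bar>\<Lambda> (s i) - \<Lambda> f\<bar> \<le> C * (\<integral>x. \<bar>s i x - f x\<bar> \<partial>M)" for i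
    using bound[of "\<lambda>x. s i x - f x"] diff[of "s i" f] lim(1,5) by simp
  then have "(\<lambda>i. \<Lambda> (s i) - \<Lambda> f) \<longlonglongrightarrow> 0"
    by (intro Lim_null_comparison[OF _ L1] always_eventually) simp
  then have "(\<lambda>i. \<Lambda> (s i)) \<longlonglongrightarrow> \<Lambda> f"
    by (simp add: LIM_zero_iff)
  moreover have "(\<lambda>i. \<Lambda> (s i)) \<longlonglongrightarrow> \<beta> * (\<integral>x. f x \<partial>M)"
  proof -
    have "(\<lambda>i. \<integral>x. s i x \<partial>M) \<longlonglongrightarrow> (\<integral>x. f x \<partial>M)"
      by (rule integral_dominated_convergence[where w="\<lambda>x. 2 * norm (f x)"])
         (use lim in auto)
    then show ?thesis using lim(2) by (auto intro!: tendsto_mult)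
  qed
  ultimately show ?case using LIMSEQ_unique by blast
qed

locale bounded_positive_functional = finite_measure M for M :: "'a measure" +
  fixes \<Lambda> :: "('a \<Rightarrow> real) \<Rightarrow> real" and C :: real
  assumes add: "\<And>u v. integrable M u \<Longrightarrow> integrable M v \<Longrightarrow> \<Lambda> (\<lambda>x. u x + v x) = \<Lambda> u + \<Lambda> v"
    and bound: "\<And>u. integrable M u \<Longrightarrow> \<bar>\<Lambda> u\<bar> \<le> C * (\<integral>x. \<bar>u x\<bar> \<partial>M)"
    and nonneg: "\<And>u. integrable M u \<Longrightarrow> (\<And>x. x \<in> space M \<Longrightarrow> 0 \<le> u x) \<Longrightarrow> 0 \<le> \<Lambda> u"
begin

lemma integrable_indicator[simp]: "A \<in> sets M \<Longrightarrow> integrable M (indicator A :: 'a \<Rightarrow> real)"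
  by (simp add: emeasure_eq_measure)

lemma indicator_nonneg: "A \<in> sets M \<Longrightarrow> 0 \<le> \<Lambda> (indicator A)"
  by (intro nonneg) auto

lemma indicator_le: "A \<in> sets M \<Longrightarrow> \<Lambda> (indicator A) \<le> C * measure M A"
  using bound[of "indicator A"] by simp

lemma indicator_union:
  assumes "A \<in> sets M" "B \<in> sets M" "A \<inter> B = {}"
  shows "\<Lambda> (indicator (A \<union> B)) = \<Lambda> (indicator A) + \<Lambda> (indicator B)"
proof -
  have "indicator (A \<union> B) = (\<lambda>x. indicator A x + indicator B x :: real)"
    using assms by (simp add: indicator_disj_union fun_eq_iff)
  then show ?thesis using add[of "indicator A" "indicator B"] assms by simp
qed

text \<open>Continuity from below holds because the defect \<open>\<Lambda> (indicator (U - A i))\<close> is at most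
  \<open>C * measure M (U - A i)\<close>.\<close>
lemma countably_additive_indicator: "countably_additive (sets M) (\<lambda>A. ennreal (\<Lambda> (indicator A)))"
proof (subst sets.countably_additive_iff_continuous_from_below)
  show "positive (sets M) (\<lambda>A. ennreal (\<Lambda> (indicator A)))"
    using indicator_le[of "{}"] indicator_nonneg[of "{}"] by (simp add: positive_def)
  show "additive (sets M) (\<lambda>A. ennreal (\<Lambda> (indicator A)))"
    by (simp add: additive_def indicator_union indicator_nonneg ennreal_plus)
  show "\<forall>A. range A \<subseteq> sets M \<longrightarrow> incseq A \<longrightarrow> (\<Union>i. A i) \<in> sets M \<longrightarrow>
      (\<lambda>i. ennreal (\<Lambda> (indicator (A i)))) \<longlonglongrightarrow> ennreal (\<Lambda> (indicator (\<Union>i. A i)))"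
  proof safe
    fix A :: "nat \<Rightarrow> 'a set"
    assume A: "range A \<subseteq> sets M" "incseq A" "(\<Union>i. A i) \<in> sets M"
    define U where "U = (\<Union>i. A i)"
    have defect: "\<bar>\<Lambda> (indicator (A i)) - \<Lambda> (indicator U)\<bar> \<le> C * (measure M U - measure M (A i))" for i
    proof -
      have "A i \<subseteq> U" "A i \<in> sets M" "U \<in> sets M" using A by (auto simp: U_def)
      then have "\<Lambda> (indicator U) = \<Lambda> (indicator (A i)) + \<Lambda> (indicator (U - A i))"
        using indicator_union[of "A i" "U - A i"] by (simp add: Un_absorb1)
      then show ?thesis
        using indicator_nonneg indicator_le[of "U - A i"] \<open>A i \<subseteq> U\<close> \<open>A i \<in> sets M\<close> \<open>U \<in> sets M\<close>
        by (simp add: finite_measure_Diff)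
    qed
    have defect_lim: "(\<lambda>i. C * (measure M U - measure M (A i))) \<longlonglongrightarrow> 0"
      using Lim_measure_incseq[OF A(1,2)] by (auto simp: U_def intro!: tendsto_eq_intros)
    have "(\<lambda>i. \<Lambda> (indicator (A i)) - \<Lambda> (indicator U)) \<longlonglongrightarrow> 0"
      by (intro Lim_null_comparison[OF _ defect_lim] always_eventually allI) (simp add: defect)
    then show "(\<lambda>i. ennreal (\<Lambda> (indicator (A i)))) \<longlonglongrightarrow> ennreal (\<Lambda> (indicator (\<Union>i. A i)))"
      unfolding U_def[symmetric] by (intro tendsto_ennrealI) (simp add: LIM_zero_iff)
  qed
qed

lemma indicator_measure_exists:
  "\<exists>\<nu>. sets \<nu> = sets M \<and> finite_measure \<nu> \<and> absolutely_continuous M \<nu> \<and>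
    (\<forall>A\<in>sets M. measure \<nu> A = \<Lambda> (indicator A))"
proof -
  define \<nu> where "\<nu> = measure_of (space M) (sets M) (\<lambda>A. ennreal (\<Lambda> (indicator A)))"
  have emeasure_\<nu>: "emeasure \<nu> A = ennreal (\<Lambda> (indicator A))" if "A \<in> sets M" for A
    unfolding \<nu>_def
    by (rule emeasure_measure_of_sigma[OF sets.sigma_algebra_axioms _ countably_additive_indicator that])
       (use indicator_le[of "{}"] indicator_nonneg[of "{}"] in \<open>simp add: positive_def\<close>)
  have sets_\<nu>: "sets \<nu> = sets M" by (simp add: \<nu>_def)
  moreover have "finite_measure \<nu>"
  proof (rule finite_measureI)
    have "space \<nu> = space M" by (simp add: \<nu>_def)
    then show "emeasure \<nu> (space \<nu>) \<noteq> \<infinity>" by (simp add: emeasure_\<nu>)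
  qed
  moreover have "measure \<nu> A = \<Lambda> (indicator A)" if "A \<in> sets M" for A
    using that indicator_nonneg[OF that] by (simp add: measure_def emeasure_\<nu>)
  moreover have "absolutely_continuous M \<nu>"
  proof (unfold absolutely_continuous_def, safe)
    fix A assume "A \<in> null_sets M"
    then have "A \<in> sets M" "measure M A = 0" by (auto simp: measure_def null_sets_def)
    then show "A \<in> null_sets \<nu>"
      using indicator_le[of A] indicator_nonneg[of A] by (simp add: null_sets_def sets_\<nu> emeasure_\<nu>)
  qed
  ultimately show ?thesis by blast
qed

lemma indicator_density_exists:
  "\<exists>\<rho>. integrable M \<rho> \<and> (\<forall>A\<in>sets M. \<Lambda> (indicator A) = (\<integral>x\<in>A. \<rho> x \<partial>M))"
proof -
  obtain \<nu> where sets_\<nu>: "sets \<nu> = sets M" and "finite_measure \<nu>" and ac: "absolutely_continuous M \<nu>"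
    and measure_\<nu>: "\<And>A. A \<in> sets M \<Longrightarrow> measure \<nu> A = \<Lambda> (indicator A)"
    using indicator_measure_exists by blast
  then interpret \<nu>: finite_measure \<nu> by simp
  have \<nu>: "sigma_finite_measure \<nu>" by unfold_locales
  define \<rho> where "\<rho> x = enn2real (RN_deriv M \<nu> x)" for x
  have "integrable M \<rho>"
    using RN_deriv_integrable[OF \<nu> ac sets_\<nu>, of "\<lambda>x. 1"] by (simp add: \<rho>_def[abs_def])
  moreover have "\<Lambda> (indicator A) = (\<integral>x\<in>A. \<rho> x \<partial>M)" if "A \<in> sets M" for A
    using RN_deriv_integral[OF \<nu> ac sets_\<nu>, of "indicator A"] that sets.sets_into_space[OF that]
    by (simp add: measure_\<nu> \<rho>_def set_lebesgue_integral_def mult.commute sets_eq_imp_space_eq[OF sets_\<nu>]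
        Int_absorb2)
  ultimately show ?thesis by blast
qed

end

lemma ergodic_invariant_functional_eq_integral:
  fixes \<Lambda> :: "('a \<Rightarrow> real) \<Rightarrow> real"
  assumes "prob_space M" and aut: "mp_automorphism M T" and erg: "ergodic M T"
    and "bounded_positive_functional M \<Lambda> C"
    and scale: "\<And>u c. integrable M u \<Longrightarrow> \<Lambda> (\<lambda>x. c * u x) = c * \<Lambda> u"
    and inv: "\<And>A. A \<in> sets M \<Longrightarrow> \<Lambda> (indicator (T -` A \<inter> space M)) = \<Lambda> (indicator A)"
    and k: "integrable M k"
  shows "\<Lambda> k = \<Lambda> (indicator (space M)) * (\<integral>x. k x \<partial>M)"
proof -
  interpret prob_space M by fact
  interpret bounded_positive_functional M \<Lambda> C by fact
  have [measurable]: "T \<in> measurable M M" by (rule mp_automorphism_measurable[OF aut])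
  obtain \<rho> where \<rho>: "integrable M \<rho>"
    and density: "\<And>A. A \<in> sets M \<Longrightarrow> \<Lambda> (indicator A) = (\<integral>x\<in>A. \<rho> x \<partial>M)"
    using indicator_density_exists by blast
  have const: "AE x in M. \<rho> x = (\<integral>x. \<rho> x \<partial>M)"
    by (rule ergodic_invariant_density_const[OF \<open>prob_space M\<close> aut erg \<rho>])
       (simp add: inv density[symmetric])
  have \<beta>: "(\<integral>x. \<rho> x \<partial>M) = \<Lambda> (indicator (space M))"
    by (simp add: density set_integral_space[OF \<rho>])
  have indicator_measure:
    "\<Lambda> (indicator A) = \<Lambda> (indicator (space M)) * measure M A" if "A \<in> sets M" for A
  proof -
    have "(\<integral>x\<in>A. \<rho> x \<partial>M) = (\<integral>x\<in>A. \<Lambda> (indicator (space M)) \<partial>M)"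
      using \<rho> that const \<beta> by (intro set_lebesgue_integral_cong_AE) auto
    then show ?thesis using that by (simp add: density set_lebesgue_integral_def mult.commute)
  qed
  show ?thesis
    using bounded_functional_eq_integral[where \<Lambda>=\<Lambda> and C=C, OF _ _ _ _ k] add scale bound indicator_measure
    by blast
qed

section \<open>Asymptotically invariant weights\<close>

lemma closed_contains_cluster_point:
  fixes X :: "'i \<Rightarrow> 'b::topological_space"
  assumes "closed S" and "eventually (\<lambda>n. X n \<in> S) F" and "inf (nhds x) (filtermap X F) \<noteq> bot"
  shows "x \<in> S"
proof (rule ccontr)
  assume "x \<notin> S"
  then have "eventually (\<lambda>y. y \<in> - S) (nhds x)"
    using assms(1) by (intro eventually_nhds_in_open) auto
  moreover have "eventually (\<lambda>y. y \<in> S) (filtermap X F)"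
    using assms(2) by (simp add: eventually_filtermap)
  ultimately have "eventually (\<lambda>_. False) (inf (nhds x) (filtermap X F))"
    unfolding eventually_inf by blast
  with assms(3) show False by (simp add: trivial_limit_def)
qed

lemma cluster_point_eq:
  fixes X :: "'i \<Rightarrow> 'b::topological_space" and f g :: "'b \<Rightarrow> 'c::t2_space"
  assumes "inf (nhds x) (filtermap X F) \<noteq> bot" and "continuous_on UNIV f" "continuous_on UNIV g"
    and "\<And>n. f (X n) = g (X n)"
  shows "f x = g x"
  using closed_contains_cluster_point[OF closed_Collect_eq[OF assms(2,3)] _ assms(1)] assms(4) by simp

lemma cluster_point_le:
  fixes X :: "'i \<Rightarrow> 'b::topological_space" and f g :: "'b \<Rightarrow> 'c::linorder_topology"
  assumes "inf (nhds x) (filtermap X F) \<noteq> bot" and "continuous_on UNIV f" "continuous_on UNIV g"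
    and "\<And>n. f (X n) \<le> g (X n)"
  shows "f x \<le> g x"
  using closed_contains_cluster_point[OF closed_Collect_le[OF assms(2,3)] _ assms(1)] assms(4) by simp

lemma compact_functionals_bounded_by:
  fixes r :: "'u \<Rightarrow> real"
  shows "compact {\<Lambda>. \<forall>u. \<bar>\<Lambda> u\<bar> \<le> r u}"
proof -
  have "{\<Lambda>. \<forall>u. \<bar>\<Lambda> u\<bar> \<le> r u} = Pi\<^sub>E UNIV (\<lambda>u. {- r u .. r u})"
    by (auto simp: PiE_UNIV_domain Pi_iff abs_le_iff minus_le_iff)
  then show ?thesis
    using compactin_PiE[of "\<lambda>_. euclidean" UNIV "\<lambda>u. {- r u .. r u}"]
    by (simp add: euclidean_product_topology)
qed

lemma integral_weight_shift_bound:
  fixes w :: "'a \<Rightarrow> real"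
  assumes "finite_measure M" and aut: "mp_automorphism M T" and w[measurable]: "w \<in> borel_measurable M"
    and w_bound: "\<And>x. x \<in> space M \<Longrightarrow> \<bar>w x\<bar> \<le> C" and A[measurable]: "A \<in> sets M"
  shows "\<bar>(\<integral>x. w x * indicator (T -` A \<inter> space M) x \<partial>M) - (\<integral>x. w x * indicator A x \<partial>M)\<bar>
    \<le> (\<integral>x. \<bar>w (T x) - w x\<bar> \<partial>M)"
proof -
  interpret finite_measure M by fact
  have T[measurable]: "T \<in> measurable M M" by (rule mp_automorphism_measurable[OF aut])
  have wT_bound: "\<bar>w (T x)\<bar> \<le> C" if "x \<in> space M" for x
    using w_bound measurable_space[OF T that] by blast
  have indicator_T: "integrable M (\<lambda>x. indicator A (T x) :: real)"
    by (intro integrable_const_bound[where B=1]) auto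
  have w_integrable: "integrable M w" "integrable M (\<lambda>x. w (T x))"
    using integrable_bounded_mult[OF w w_bound, of "\<lambda>_. 1"]
      integrable_bounded_mult[of "\<lambda>x. w (T x)" M C "\<lambda>_. 1"] wT_bound by simp_all
  have "(\<integral>x. w x * indicator (T -` A \<inter> space M) x \<partial>M) = (\<integral>x. w x * indicator A (T x) \<partial>M)"
    by (rule Bochner_Integration.integral_cong) (auto simp: indicator_def)
  moreover have "(\<integral>x. w x * indicator A x \<partial>M) = (\<integral>x. w (T x) * indicator A (T x) \<partial>M)"
    by (rule mp_automorphism_integral_comp[OF aut, symmetric]) measurable
  moreover have int_diff: "integrable M (\<lambda>x. (w x - w (T x)) * indicator A (T x))"
    and "(\<integral>x. w x * indicator A (T x) \<partial>M) - (\<integral>x. w (T x) * indicator A (T x) \<partial>M)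
      = (\<integral>x. (w x - w (T x)) * indicator A (T x) \<partial>M)"
    using integrable_bounded_mult[OF w w_bound indicator_T]
      integrable_bounded_mult[of "\<lambda>x. w (T x)" M C, OF _ wT_bound indicator_T]
    by (simp_all add: left_diff_distrib)
  moreover have "\<bar>\<integral>x. (w x - w (T x)) * indicator A (T x) \<partial>M\<bar> \<le> (\<integral>x. \<bar>w (T x) - w x\<bar> \<partial>M)"
    using w_integrable integrable_abs[OF int_diff]
    by (intro integral_abs_bound[THEN order_trans] integral_mono)
       (auto simp: indicator_def abs_minus_commute)
  ultimately show ?thesis by simp
qed

text \<open>Set to \<open>0\<close> on non-integrable \<open>u\<close>, so that for bounded weights all these functionals lie in
  one compact product of intervals.\<close>
definition weighted_integral :: "'a measure \<Rightarrow> ('a \<Rightarrow> real) \<Rightarrow> ('a \<Rightarrow> real) \<Rightarrow> real" where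
  "weighted_integral M w u = (if integrable M u then \<integral>x. w x * u x \<partial>M else 0)"

lemma weighted_integral_bound:
  assumes "\<And>x. x \<in> space M \<Longrightarrow> \<bar>w x\<bar> \<le> C" and "w \<in> borel_measurable M"
  shows "\<bar>weighted_integral M w u\<bar> \<le> \<bar>C\<bar> * (\<integral>x. \<bar>u x\<bar> \<partial>M)"
proof (cases "integrable M u")
  case True
  have "\<bar>w x * u x\<bar> \<le> \<bar>C\<bar> * \<bar>u x\<bar>" if "x \<in> space M" for x
    unfolding abs_mult using assms(1)[OF that] by (intro mult_right_mono) auto
  then have "\<bar>\<integral>x. w x * u x \<partial>M\<bar> \<le> (\<integral>x. \<bar>C\<bar> * \<bar>u x\<bar> \<partial>M)"
    using True integrable_bounded_mult[OF assms(2,1) True]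
    by (intro integral_abs_bound[THEN order_trans] integral_mono) auto
  with True show ?thesis by (simp add: weighted_integral_def)
qed (simp add: weighted_integral_def)

lemma cluster_point_weighted_integrals_exists:
  fixes w :: "nat \<Rightarrow> 'a \<Rightarrow> real"
  assumes "F \<noteq> bot" and "\<And>n. w n \<in> borel_measurable M" and "\<And>n x. x \<in> space M \<Longrightarrow> \<bar>w n x\<bar> \<le> C"
  shows "\<exists>\<Lambda>. inf (nhds \<Lambda>) (filtermap (\<lambda>n. weighted_integral M (w n)) F) \<noteq> bot"
proof -
  have "eventually (\<lambda>\<Lambda>. \<Lambda> \<in> {\<Lambda>. \<forall>u. \<bar>\<Lambda> u\<bar> \<le> \<bar>C\<bar> * (\<integral>x. \<bar>u x\<bar> \<partial>M)})
      (filtermap (\<lambda>n. weighted_integral M (w n)) F)"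
    using assms(2,3) by (simp add: eventually_filtermap weighted_integral_bound)
  moreover have "filtermap (\<lambda>n. weighted_integral M (w n)) F \<noteq> bot"
    using assms(1) by (simp add: filtermap_bot_iff)
  ultimately show ?thesis
    using compact_functionals_bounded_by[of "\<lambda>u. \<bar>C\<bar> * (\<integral>x. \<bar>u x\<bar> \<partial>M)"]
    unfolding compact_filter by blast
qed

lemma cluster_point_tendsto:
  fixes X :: "'i \<Rightarrow> 'b::topological_space" and g :: "'b \<Rightarrow> real"
  assumes cluster: "inf (nhds x) (filtermap X F) \<noteq> bot" and "F \<le> G"
    and "continuous_on UNIV g" and lim: "((\<lambda>n. g (X n)) \<longlongrightarrow> c) G"
  shows "g x = c"
proof -
  have "\<bar>g x - c\<bar> \<le> e" if "e > 0" for e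
  proof -
    have "eventually (\<lambda>n. X n \<in> {y. \<bar>g y - c\<bar> \<le> e}) F"
      using filter_leD[OF \<open>F \<le> G\<close> tendstoD[OF lim that]] by (simp add: dist_real_def eventually_mono)
    moreover have "closed {y. \<bar>g y - c\<bar> \<le> e}"
      using \<open>continuous_on UNIV g\<close> by (intro closed_Collect_le continuous_intros)
    ultimately show ?thesis
      using closed_contains_cluster_point[OF _ _ cluster] by blast
  qed
  then show ?thesis using dense_eq0_I[of "g x - c"] by simp
qed

lemma weighted_integral_indicator_shift_tendsto_zero:
  fixes w :: "nat \<Rightarrow> 'a \<Rightarrow> real"
  assumes "finite_measure M" and aut: "mp_automorphism M T" and w[measurable]: "\<And>n. w n \<in> borel_measurable M"
    and w_bound: "\<And>n x. x \<in> space M \<Longrightarrow> \<bar>w n x\<bar> \<le> C"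
    and w_invariant: "(\<lambda>n. \<integral>x. \<bar>w n (T x) - w n x\<bar> \<partial>M) \<longlonglongrightarrow> 0"
    and A[measurable]: "A \<in> sets M"
  shows "(\<lambda>n. weighted_integral M (w n) (indicator (T -` A \<inter> space M))
    - weighted_integral M (w n) (indicator A)) \<longlonglongrightarrow> 0"
proof -
  interpret finite_measure M by fact
  have [measurable]: "T \<in> measurable M M" by (rule mp_automorphism_measurable[OF aut])
  have "T -` A \<inter> space M \<in> sets M" by measurable
  then have "\<bar>weighted_integral M (w n) (indicator (T -` A \<inter> space M)) - weighted_integral M (w n) (indicator A)\<bar>
      \<le> (\<integral>x. \<bar>w n (T x) - w n x\<bar> \<partial>M)" for n
    using integral_weight_shift_bound[OF \<open>finite_measure M\<close> aut w w_bound A] A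
    by (simp add: weighted_integral_def emeasure_eq_measure)
  then show ?thesis
    by (intro Lim_null_comparison[OF _ w_invariant] always_eventually) simp
qed

lemma cluster_point_weighted_integrals_bounded_positive:
  fixes w :: "nat \<Rightarrow> 'a \<Rightarrow> real" and \<Lambda> :: "('a \<Rightarrow> real) \<Rightarrow> real"
  assumes "finite_measure M" and w[measurable]: "\<And>n. w n \<in> borel_measurable M"
    and w_nonneg: "\<And>n x. x \<in> space M \<Longrightarrow> 0 \<le> w n x"
    and w_le: "\<And>n x. x \<in> space M \<Longrightarrow> w n x \<le> C" and "0 \<le> C"
    and cluster: "inf (nhds \<Lambda>) (filtermap (\<lambda>n. weighted_integral M (w n)) F) \<noteq> bot"
  shows "bounded_positive_functional M \<Lambda> C"
proof (intro bounded_positive_functional.intro \<open>finite_measure M\<close> bounded_positive_functional_axioms.intro)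
  have w_bound: "\<bar>w n x\<bar> \<le> C" if "x \<in> space M" for n x
    using w_nonneg[OF that] w_le[OF that] by simp
  have coord: "continuous_on UNIV (\<lambda>\<Lambda>. \<Lambda> u)" for u :: "'a \<Rightarrow> real"
    by simp
  fix u v :: "'a \<Rightarrow> real"
  assume u: "integrable M u" and v: "integrable M v"
  have "integrable M (\<lambda>x. w n x * u x)" "integrable M (\<lambda>x. w n x * v x)" for n
    using u v w_bound by (auto intro!: integrable_bounded_mult[where C=C])
  with u v show "\<Lambda> (\<lambda>x. u x + v x) = \<Lambda> u + \<Lambda> v"
    by (intro cluster_point_eq[OF cluster, of "\<lambda>\<Lambda>. \<Lambda> (\<lambda>x. u x + v x)" "\<lambda>\<Lambda>. \<Lambda> u + \<Lambda> v"])
       (simp_all add: weighted_integral_def distrib_left continuous_intros coord)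
  show "\<bar>\<Lambda> u\<bar> \<le> C * (\<integral>x. \<bar>u x\<bar> \<partial>M)"
    using weighted_integral_bound[OF w_bound w] \<open>0 \<le> C\<close>
    by (intro cluster_point_le[OF cluster, of "\<lambda>\<Lambda>. \<bar>\<Lambda> u\<bar>" "\<lambda>_. C * (\<integral>x. \<bar>u x\<bar> \<partial>M)"])
       (simp_all add: continuous_intros coord)
next
  have coord: "continuous_on UNIV (\<lambda>\<Lambda>. \<Lambda> u)" for u :: "'a \<Rightarrow> real"
    by simp
  fix u :: "'a \<Rightarrow> real"
  assume "integrable M u" "\<And>x. x \<in> space M \<Longrightarrow> 0 \<le> u x"
  then show "0 \<le> \<Lambda> u"
    by (intro cluster_point_le[OF cluster, of "\<lambda>_. 0" "\<lambda>\<Lambda>. \<Lambda> u"])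
       (simp_all add: weighted_integral_def continuous_intros coord w_nonneg integral_nonneg)
qed

lemma ergodic_cluster_point_weighted_integrals:
  fixes w :: "nat \<Rightarrow> 'a \<Rightarrow> real" and \<Lambda> :: "('a \<Rightarrow> real) \<Rightarrow> real"
  assumes "prob_space M" and aut: "mp_automorphism M T" and erg: "ergodic M T"
    and w[measurable]: "\<And>n. w n \<in> borel_measurable M"
    and w_nonneg: "\<And>n x. x \<in> space M \<Longrightarrow> 0 \<le> w n x"
    and w_le: "\<And>n x. x \<in> space M \<Longrightarrow> w n x \<le> C"
    and w_integral: "(\<lambda>n. \<integral>x. w n x \<partial>M) \<longlonglongrightarrow> \<beta>"
    and w_invariant: "(\<lambda>n. \<integral>x. \<bar>w n (T x) - w n x\<bar> \<partial>M) \<longlonglongrightarrow> 0"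
    and "F \<le> sequentially"
    and cluster: "inf (nhds \<Lambda>) (filtermap (\<lambda>n. weighted_integral M (w n)) F) \<noteq> bot"
    and k: "integrable M k"
  shows "\<Lambda> k = \<beta> * (\<integral>x. k x \<partial>M)"
proof -
  interpret prob_space M by fact
  have w_bound: "\<bar>w n x\<bar> \<le> C" if "x \<in> space M" for n x
    using w_nonneg[OF that] w_le[OF that] by simp
  then have "0 \<le> C" using not_empty by (meson abs_ge_zero ex_in_conv order.trans)
  have coord: "continuous_on UNIV (\<lambda>\<Lambda>. \<Lambda> u)" for u :: "'a \<Rightarrow> real"
    by simp
  have "\<Lambda> k = \<Lambda> (indicator (space M)) * (\<integral>x. k x \<partial>M)"
  proof (rule ergodic_invariant_functional_eq_integral[OF \<open>prob_space M\<close> aut erg _ _ _ k])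
    show "bounded_positive_functional M \<Lambda> C"
      by (rule cluster_point_weighted_integrals_bounded_positive[OF finite_measure_axioms w w_nonneg w_le
            \<open>0 \<le> C\<close> cluster])
    show "\<Lambda> (\<lambda>x. c * u x) = c * \<Lambda> u" if "integrable M u" for u c
      using that
      by (intro cluster_point_eq[OF cluster, of "\<lambda>\<Lambda>. \<Lambda> (\<lambda>x. c * u x)" "\<lambda>\<Lambda>. c * \<Lambda> u"])
         (simp_all add: weighted_integral_def mult.left_commute continuous_intros coord)
    show "\<Lambda> (indicator (T -` A \<inter> space M)) = \<Lambda> (indicator A)" if "A \<in> sets M" for A
    proof -
      have "(\<lambda>n. weighted_integral M (w n) (indicator (T -` A \<inter> space M))
          - weighted_integral M (w n) (indicator A)) \<longlonglongrightarrow> 0"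
        by (rule weighted_integral_indicator_shift_tendsto_zero[OF finite_measure_axioms aut w _ w_invariant that])
           (rule w_bound)
      then have "\<Lambda> (indicator (T -` A \<inter> space M)) - \<Lambda> (indicator A) = 0"
        by (rule cluster_point_tendsto[OF cluster \<open>F \<le> sequentially\<close>, rotated])
           (intro continuous_intros coord)
      then show ?thesis by simp
    qed
  qed
  also have "\<Lambda> (indicator (space M)) = \<beta>"
  proof (rule cluster_point_tendsto[OF cluster \<open>F \<le> sequentially\<close> coord])
    have "weighted_integral M (w n) (indicator (space M)) = (\<integral>x. w n x \<partial>M)" for n
      by (auto simp: weighted_integral_def emeasure_eq_measure intro!: Bochner_Integration.integral_cong)
    then show "(\<lambda>n. weighted_integral M (w n) (indicator (space M))) \<longlonglongrightarrow> \<beta>"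
      using w_integral by simp
  qed
  finally show ?thesis .
qed

text \<open>The functionals \<open>u \<mapsto> \<integral> w n * u\<close> have a cluster point \<open>\<Lambda>\<close> in the compact product
  topology along any subsequence; \<open>\<Lambda>\<close> inherits positivity, linearity and invariance, so by
  ergodicity it is \<open>\<beta>\<close> times the integral.  Hence no subsequence stays away from the limit.\<close>
lemma ergodic_weighted_integral_tendsto_nonneg:
  fixes w :: "nat \<Rightarrow> 'a \<Rightarrow> real"
  assumes "prob_space M" and aut: "mp_automorphism M T" and erg: "ergodic M T"
    and w[measurable]: "\<And>n. w n \<in> borel_measurable M"
    and w_nonneg: "\<And>n x. x \<in> space M \<Longrightarrow> 0 \<le> w n x"
    and w_le: "\<And>n x. x \<in> space M \<Longrightarrow> w n x \<le> C"
    and w_integral: "(\<lambda>n. \<integral>x. w n x \<partial>M) \<longlonglongrightarrow> \<beta>"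
    and w_invariant: "(\<lambda>n. \<integral>x. \<bar>w n (T x) - w n x\<bar> \<partial>M) \<longlonglongrightarrow> 0"
    and k: "integrable M k"
  shows "(\<lambda>n. \<integral>x. w n x * k x \<partial>M) \<longlonglongrightarrow> \<beta> * (\<integral>x. k x \<partial>M)"
proof (rule ccontr)
  define l where "l = \<beta> * (\<integral>x. k x \<partial>M)"
  define L where "L n = weighted_integral M (w n)" for n
  assume "\<not> (\<lambda>n. \<integral>x. w n x * k x \<partial>M) \<longlonglongrightarrow> \<beta> * (\<integral>x. k x \<partial>M)"
  then obtain \<epsilon> where "\<epsilon> > 0" and "\<not> eventually (\<lambda>n. dist (L n k) l < \<epsilon>) sequentially"
    using k by (auto simp: tendsto_iff L_def l_def weighted_integral_def)
  then have "frequently (\<lambda>n. \<epsilon> \<le> dist (L n k) l) sequentially"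
    by (simp add: not_eventually not_less)
  define F where "F = inf sequentially (principal {n. \<epsilon> \<le> dist (L n k) l})"
  have "F \<noteq> bot"
    using \<open>frequently _ _\<close> by (simp add: F_def trivial_limit_def eventually_inf_principal frequently_def)
  moreover have "\<bar>w n x\<bar> \<le> C" if "x \<in> space M" for n x
    using w_nonneg[OF that] w_le[OF that] by simp
  ultimately obtain \<Lambda> where cluster: "inf (nhds \<Lambda>) (filtermap L F) \<noteq> bot"
    unfolding L_def by (metis cluster_point_weighted_integrals_exists w)
  then have "\<Lambda> k = l"
    unfolding l_def L_def
    by (intro ergodic_cluster_point_weighted_integrals[OF assms(1-8) _ _ k]) (simp_all add: F_def)
  moreover have "\<Lambda> \<in> {\<Lambda>. \<epsilon> \<le> dist (\<Lambda> k) l}"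
    by (rule closed_contains_cluster_point[OF _ _ cluster])
       (auto simp: F_def eventually_inf_principal intro!: closed_Collect_le continuous_intros)
  ultimately show False using \<open>\<epsilon> > 0\<close> by simp
qed

lemma ergodic_weighted_integral_tendsto:
  fixes w :: "nat \<Rightarrow> 'a \<Rightarrow> real"
  assumes "prob_space M" and aut: "mp_automorphism M T" and erg: "ergodic M T"
    and w[measurable]: "\<And>n. w n \<in> borel_measurable M"
    and w_bound: "\<And>n x. x \<in> space M \<Longrightarrow> \<bar>w n x\<bar> \<le> C"
    and w_integral: "(\<lambda>n. \<integral>x. w n x \<partial>M) \<longlonglongrightarrow> \<beta>"
    and w_invariant: "(\<lambda>n. \<integral>x. \<bar>w n (T x) - w n x\<bar> \<partial>M) \<longlonglongrightarrow> 0"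
    and k: "integrable M k"
  shows "(\<lambda>n. \<integral>x. w n x * k x \<partial>M) \<longlonglongrightarrow> \<beta> * (\<integral>x. k x \<partial>M)"
proof -
  interpret prob_space M by fact
  have w_integrable: "integrable M (w n)" for n
    using w_bound by (intro integrable_const_bound[where B=C]) auto
  have w_mult_integrable: "integrable M (\<lambda>x. w n x * k x)" for n
    using k w_bound by (intro integrable_bounded_mult[where C=C]) auto
  \<comment> \<open>shift the weights into \<open>[0, 2 C]\<close>\<close>
  have "(\<lambda>n. \<integral>x. (w n x + C) * k x \<partial>M) \<longlonglongrightarrow> (\<beta> + C) * (\<integral>x. k x \<partial>M)"
  proof (rule ergodic_weighted_integral_tendsto_nonneg[OF \<open>prob_space M\<close> aut erg _ _ _ _ _ k])
    show "0 \<le> w n x + C" "w n x + C \<le> 2 * C" if "x \<in> space M" for n x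
      using w_bound[OF that, of n] by (auto simp: abs_le_iff)
    show "(\<lambda>n. \<integral>x. w n x + C \<partial>M) \<longlonglongrightarrow> \<beta> + C"
      using w_integrable by (simp add: prob_space tendsto_add[OF w_integral])
  qed (use w_invariant in simp_all)
  moreover have "(\<integral>x. (w n x + C) * k x \<partial>M) = (\<integral>x. w n x * k x \<partial>M) + C * (\<integral>x. k x \<partial>M)" for n
    using w_mult_integrable k by (simp add: distrib_right)
  ultimately have "(\<lambda>n. (\<integral>x. w n x * k x \<partial>M) + C * (\<integral>x. k x \<partial>M) - C * (\<integral>x. k x \<partial>M))
      \<longlonglongrightarrow> (\<beta> + C) * (\<integral>x. k x \<partial>M) - C * (\<integral>x. k x \<partial>M)"
    by (intro tendsto_diff) simp_all
  then show ?thesis by (simp add: distrib_right)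
qed

section \<open>Rigidity along a sequence of sets\<close>

lemma tendsto_zero_by_approximate_bounds:
  fixes x :: "nat \<Rightarrow> real"
  assumes "\<And>\<epsilon>. \<epsilon> > 0 \<Longrightarrow> \<exists>r. r \<longlonglongrightarrow> 0 \<and> (\<forall>n. \<bar>x n\<bar> \<le> \<epsilon> + r n)"
  shows "x \<longlonglongrightarrow> 0"
proof (rule tendstoI)
  fix e :: real assume "e > 0"
  then obtain r where r: "r \<longlonglongrightarrow> 0" "\<And>n. \<bar>x n\<bar> \<le> e / 2 + r n"
    using assms[of "e / 2"] by auto
  have "eventually (\<lambda>n. dist (r n) 0 < e / 2) sequentially"
    using r(1) \<open>e > 0\<close> by (intro tendstoD) auto
  then show "eventually (\<lambda>n. dist (x n) 0 < e) sequentially"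
  proof eventually_elim
    case (elim n)
    then show ?case using r(2)[of n] abs_ge_self[of "r n"] by (simp add: dist_real_def)
  qed
qed

lemma finite_measure_abs_gt_tendsto_zero:
  fixes f :: "'a \<Rightarrow> real"
  assumes "finite_measure M" and [measurable]: "f \<in> borel_measurable M"
  shows "(\<lambda>N. measure M {x \<in> space M. real N < \<bar>f x\<bar>}) \<longlonglongrightarrow> 0"
proof -
  interpret finite_measure M by fact
  have "(\<lambda>N. measure M {x \<in> space M. real N < \<bar>f x\<bar>}) \<longlonglongrightarrow> measure M (\<Inter>N. {x \<in> space M. real N < \<bar>f x\<bar>})"
    by (rule finite_Lim_measure_decseq) (auto simp: decseq_def)
  moreover have "(\<Inter>N. {x \<in> space M. real N < \<bar>f x\<bar>}) = {}"
    by (auto simp: not_less) (meson real_arch_simple order.strict_trans2 not_le)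
  ultimately show ?thesis by simp
qed

lemma grid_cell_separates:
  fixes y y' h N :: real
  assumes "h > 0" and "\<bar>y\<bar> \<le> N" and "h \<le> \<bar>y' - y\<bar>"
  shows "\<exists>j\<in>{- \<lceil>N / h\<rceil> - 1 .. \<lceil>N / h\<rceil>}. of_int j * h \<le> y \<and> y < (of_int j + 1) * h \<and>
    \<not> (of_int j * h \<le> y' \<and> y' < (of_int j + 1) * h)"
proof (intro bexI conjI)
  define j where "j = \<lfloor>y / h\<rfloor>"
  show lower: "of_int j * h \<le> y" and upper: "y < (of_int j + 1) * h"
    using assms(1) by (simp_all add: j_def floor_divide_lower floor_divide_upper)
  show "\<not> (of_int j * h \<le> y' \<and> y' < (of_int j + 1) * h)"
    using lower upper assms(3) by (auto simp: algebra_simps abs_le_iff)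
  have "- N / h \<le> y / h" "y / h \<le> N / h"
    using assms(1,2) divide_right_mono[of "- N" y h] divide_right_mono[of y N h] by (auto simp: abs_le_iff)
  then show "j \<in> {- \<lceil>N / h\<rceil> - 1 .. \<lceil>N / h\<rceil>}"
    unfolding j_def by (auto simp: floor_le_iff le_floor_iff ceiling_le_iff) linarith+
qed

text \<open>Cut the range of \<open>f\<close> into cells of width \<open>\<delta>\<close>: a point where \<open>f\<close> moves by at least
  \<open>\<delta>\<close> under \<open>T ^^ q n\<close> lies in the symmetric difference of a cell and its preimage, and outside
  a set of small measure only finitely many cells matter.\<close>
lemma rigidity_along_tendsto_measure:
  fixes f :: "'a \<Rightarrow> real"
  assumes "finite_measure M" and T[measurable]: "T \<in> measurable M M"
    and rig: "rigidity_along M T q W" and W[measurable]: "\<And>n. W n \<in> sets M"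
    and f[measurable]: "f \<in> borel_measurable M" and "\<delta> > 0"
  shows "(\<lambda>n. measure M (W n \<inter> {x \<in> space M. \<delta> \<le> \<bar>f ((T ^^ q n) x) - f x\<bar>})) \<longlonglongrightarrow> 0"
proof (rule tendsto_zero_by_approximate_bounds)
  interpret finite_measure M by fact
  have [measurable]: "(T ^^ i) \<in> measurable M M" for i by (rule measurable_funpow[OF T])
  fix \<epsilon> :: real assume "\<epsilon> > 0"
  obtain N :: nat where N: "measure M {x \<in> space M. real N < \<bar>f x\<bar>} < \<epsilon>"
    using finite_measure_abs_gt_tendsto_zero[OF \<open>finite_measure M\<close> f] \<open>\<epsilon> > 0\<close>
    by (meson LIMSEQ_le_const not_le order.refl)
  define tail where "tail = {x \<in> space M. real N < \<bar>f x\<bar>}"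
  define J where "J = {- \<lceil>real N / \<delta>\<rceil> - 1 .. \<lceil>real N / \<delta>\<rceil>}"
  define cell where "cell j = {x \<in> space M. of_int j * \<delta> \<le> f x \<and> f x < (of_int j + 1) * \<delta>}" for j :: int
  define D where "D n j = symdiff ((T ^^ q n) -` cell j \<inter> space M) (cell j) \<inter> W n" for n j
  have cell_sets[measurable]: "cell j \<in> sets M" for j
    unfolding cell_def by measurable
  have [measurable]: "tail \<in> sets M" "D n j \<in> sets M" for n j
    unfolding tail_def D_def symdiff_def by measurable
  define r where "r n = (\<Sum>j\<in>J. measure M (D n j))" for n
  have "r \<longlonglongrightarrow> 0"
    using rig unfolding r_def D_def rigidity_along_def
    by (intro tendsto_null_sum) (simp add: cell_sets)
  moreover have "\<bar>measure M (W n \<inter> {x \<in> space M. \<delta> \<le> \<bar>f ((T ^^ q n) x) - f x\<bar>})\<bar> \<le> \<epsilon> + r n" for n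
  proof -
    have "W n \<inter> {x \<in> space M. \<delta> \<le> \<bar>f ((T ^^ q n) x) - f x\<bar>} \<subseteq> (\<Union>j\<in>J. D n j) \<union> tail"
    proof safe
      fix x assume x: "x \<in> W n" "x \<in> space M" "\<delta> \<le> \<bar>f ((T ^^ q n) x) - f x\<bar>" "x \<notin> tail"
      then have "\<bar>f x\<bar> \<le> real N" by (auto simp: tail_def)
      from grid_cell_separates[OF \<open>\<delta> > 0\<close> this x(3)] x(1,2) measurable_space[of "T ^^ q n" M M x]
      show "x \<in> (\<Union>j\<in>J. D n j)"
        by (force simp: J_def D_def cell_def symdiff_def)
    qed
    then have "measure M (W n \<inter> {x \<in> space M. \<delta> \<le> \<bar>f ((T ^^ q n) x) - f x\<bar>})
        \<le> measure M ((\<Union>j\<in>J. D n j) \<union> tail)"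
      by (intro finite_measure_mono) (auto simp: J_def)
    also have "\<dots> \<le> measure M (\<Union>j\<in>J. D n j) + measure M tail"
      by (intro measure_Un_le) (auto simp: J_def)
    also have "measure M (\<Union>j\<in>J. D n j) \<le> r n"
      unfolding r_def by (intro finite_measure_subadditive_finite) (auto simp: J_def)
    finally show ?thesis using N by (simp add: tail_def)
  qed
  ultimately show "\<exists>r. r \<longlonglongrightarrow> 0 \<and> (\<forall>n. \<bar>measure M (W n \<inter> {x \<in> space M. \<delta> \<le> \<bar>f ((T ^^ q n) x) - f x\<bar>})\<bar> \<le> \<epsilon> + r n)"
    by blast
qed

section \<open>Integrals over almost invariant sets\<close>

lemma integral_uniform_measure:
  fixes g :: "'a \<Rightarrow> real"
  assumes A[measurable]: "A \<in> sets M" and "emeasure M A \<noteq> \<infinity>" and "measure M A > 0"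
    and g[measurable]: "g \<in> borel_measurable M"
  shows "(\<integral>x. g x \<partial>uniform_measure M A) = (\<integral>x. indicator A x * g x \<partial>M) / measure M A"
proof -
  have "uniform_measure M A = density M (\<lambda>x. ennreal (indicator A x / measure M A))"
    unfolding uniform_measure_def
  proof (rule density_cong)
    show "AE x in M. indicator A x / emeasure M A = ennreal (indicator A x / measure M A)"
      using assms(2,3)
      by (intro AE_I2)
         (auto simp: emeasure_eq_ennreal_measure split: split_indicator,
          metis divide_ennreal ennreal_1 zero_le_one)
  qed auto
  then have "(\<integral>x. g x \<partial>uniform_measure M A) = (\<integral>x. inverse (measure M A) * (indicator A x * g x) \<partial>M)"
    by (simp add: integral_density divide_inverse mult_ac)
  then show ?thesis by (simp add: divide_inverse mult.commute)
qed

lemma set_integral_tendsto_of_weak_conv: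
  fixes F :: "nat \<Rightarrow> 'a \<Rightarrow> 'b::metric_space" and \<psi> :: "'b \<Rightarrow> real"
  assumes "finite_measure M" and W[measurable]: "\<And>n. W n \<in> sets M"
    and W_measure: "(\<lambda>n. measure M (W n)) \<longlonglongrightarrow> \<alpha>" and "\<alpha> > 0"
    and F[measurable]: "\<And>n. F n \<in> borel_measurable M"
    and conv: "weak_conv_measures (\<lambda>n. distr (cond_measure M (W n)) borel (F n)) P"
    and \<psi>_cont: "continuous_on UNIV \<psi>" and \<psi>_bdd: "bounded (range \<psi>)"
  shows "(\<lambda>n. \<integral>x. indicator (W n) x * \<psi> (F n x) \<partial>M) \<longlonglongrightarrow> \<alpha> * (\<integral>z. \<psi> z \<partial>P)"
proof -
  interpret finite_measure M by fact
  have [measurable]: "\<psi> \<in> borel_measurable borel"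
    by (rule borel_measurable_continuous_onI[OF \<psi>_cont])
  have "eventually (\<lambda>n. measure M (W n) > 0) sequentially"
    by (rule order_tendstoD(1)[OF W_measure \<open>\<alpha> > 0\<close>])
  then have "eventually (\<lambda>n. measure M (W n) * (\<integral>z. \<psi> z \<partial>distr (cond_measure M (W n)) borel (F n))
      = (\<integral>x. indicator (W n) x * \<psi> (F n x) \<partial>M)) sequentially"
  proof eventually_elim
    case (elim n)
    have "(\<integral>z. \<psi> z \<partial>distr (cond_measure M (W n)) borel (F n)) = (\<integral>x. \<psi> (F n x) \<partial>uniform_measure M (W n))"
      unfolding cond_measure_def by (rule integral_distr) measurable
    also have "\<dots> = (\<integral>x. indicator (W n) x * \<psi> (F n x) \<partial>M) / measure M (W n)"
      using elim by (intro integral_uniform_measure) (simp_all add: emeasure_eq_measure)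
    finally show ?case using elim by simp
  qed
  moreover have "(\<lambda>n. measure M (W n) * (\<integral>z. \<psi> z \<partial>distr (cond_measure M (W n)) borel (F n)))
      \<longlonglongrightarrow> \<alpha> * (\<integral>z. \<psi> z \<partial>P)"
    using conv \<psi>_cont \<psi>_bdd by (intro tendsto_mult W_measure) (simp add: weak_conv_measures_def)
  ultimately show ?thesis by (rule Lim_transform_eventually[rotated])
qed

lemma indicator_mult_shift_le:
  fixes \<psi> :: "'b::metric_space \<Rightarrow> real"
  assumes \<psi>_bound: "\<And>z. \<bar>\<psi> z\<bar> \<le> B"
    and \<delta>: "\<And>y z. dist y z < \<delta> \<Longrightarrow> dist (\<psi> y) (\<psi> z) < \<epsilon>" and "\<epsilon> > 0"
  shows "\<bar>indicator W x' * \<psi> z' - indicator W x * \<psi> z\<bar>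
    \<le> \<epsilon> + B * \<bar>indicator W x' - indicator W x\<bar> + 2 * B * (indicator W x * of_bool (\<delta> \<le> dist z' z))"
proof -
  have "0 \<le> B" using \<psi>_bound[of z] by simp
  consider "x \<in> W \<longleftrightarrow> x' \<notin> W" | "x \<notin> W" "x' \<notin> W" | "x \<in> W" "x' \<in> W" "\<delta> \<le> dist z' z"
    | "x \<in> W" "x' \<in> W" "dist z' z < \<delta>"
    by fastforce
  then show ?thesis
  proof cases
    case 1
    then show ?thesis
      using \<psi>_bound[of z] \<psi>_bound[of z'] \<open>\<epsilon> > 0\<close> \<open>0 \<le> B\<close> by (cases "x \<in> W") (auto simp: abs_le_iff)
  next
    case 3
    then show ?thesis
      using \<psi>_bound[of z] \<psi>_bound[of z'] \<open>\<epsilon> > 0\<close> by (auto simp: abs_le_iff)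
  next
    case 4
    then show ?thesis using \<delta>[of z' z] by (simp add: dist_real_def)
  qed (use \<open>\<epsilon> > 0\<close> \<open>0 \<le> B\<close> in simp)
qed

lemma set_weight_shift_tendsto_zero:
  fixes F :: "nat \<Rightarrow> 'a \<Rightarrow> 'b::{metric_space, second_countable_topology}" and \<psi> :: "'b \<Rightarrow> real"
  assumes "prob_space M" and T[measurable]: "T \<in> measurable M M" and W[measurable]: "\<And>n. W n \<in> sets M"
    and W_invariant: "(\<lambda>n. measure M (symdiff (W n) (T -` W n \<inter> space M))) \<longlonglongrightarrow> 0"
    and F[measurable]: "\<And>n. F n \<in> borel_measurable M"
    and F_invariant: "\<And>\<delta>. \<delta> > 0 \<Longrightarrow>
      (\<lambda>n. measure M (W n \<inter> {x \<in> space M. \<delta> \<le> dist (F n (T x)) (F n x)})) \<longlonglongrightarrow> 0"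
    and \<psi>_bound: "\<And>z. \<bar>\<psi> z\<bar> \<le> B" and \<psi>_uc: "uniformly_continuous_on UNIV \<psi>"
  shows "(\<lambda>n. \<integral>x. \<bar>indicator (W n) (T x) * \<psi> (F n (T x)) - indicator (W n) x * \<psi> (F n x)\<bar> \<partial>M)
    \<longlonglongrightarrow> 0"
proof (rule tendsto_zero_by_approximate_bounds)
  interpret prob_space M by fact
  have [measurable]: "\<psi> \<in> borel_measurable borel"
    using \<psi>_uc by (intro borel_measurable_continuous_onI uniformly_continuous_imp_continuous)
  have "0 \<le> B" using \<psi>_bound[of undefined] by simp
  define w where "w n x = indicator (W n) x * \<psi> (F n x)" for n x
  have [measurable]: "w n \<in> borel_measurable M" for n unfolding w_def by measurable
  fix \<epsilon> :: real assume "\<epsilon> > 0"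
  then obtain \<delta> where "\<delta> > 0" and \<delta>: "\<And>y z. dist y z < \<delta> \<Longrightarrow> dist (\<psi> y) (\<psi> z) < \<epsilon>"
    using \<psi>_uc unfolding uniformly_continuous_on_def by (metis UNIV_I)
  define S where "S n = symdiff (W n) (T -` W n \<inter> space M)" for n
  define E where "E n = W n \<inter> {x \<in> space M. \<delta> \<le> dist (F n (T x)) (F n x)}" for n
  have [measurable]: "S n \<in> sets M" "E n \<in> sets M" for n
    unfolding S_def E_def symdiff_def by measurable
  define r where "r n = B * measure M (S n) + 2 * B * measure M (E n)" for n
  have "r \<longlonglongrightarrow> B * 0 + 2 * B * 0"
    unfolding r_def S_def E_def by (intro tendsto_intros W_invariant F_invariant \<open>\<delta> > 0\<close>)
  then have r_lim: "r \<longlonglongrightarrow> 0" by simp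
  have pointwise:
    "\<bar>w n (T x) - w n x\<bar> \<le> \<epsilon> + B * indicator (S n) x + 2 * B * indicator (E n) x"
    if x: "x \<in> space M" for n x
  proof -
    have "\<bar>indicator (W n) (T x) - indicator (W n) x\<bar> = (indicator (S n) x :: real)"
      using x measurable_space[OF T x] by (auto simp: S_def symdiff_def indicator_def)
    moreover have "indicator (W n) x * of_bool (\<delta> \<le> dist (F n (T x)) (F n x)) = (indicator (E n) x :: real)"
      using x by (auto simp: E_def indicator_def)
    moreover have "\<bar>indicator (W n) (T x) * \<psi> (F n (T x)) - indicator (W n) x * \<psi> (F n x)\<bar>
        \<le> \<epsilon> + B * \<bar>indicator (W n) (T x) - indicator (W n) x\<bar>
          + 2 * B * (indicator (W n) x * of_bool (\<delta> \<le> dist (F n (T x)) (F n x)))"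
      by (rule indicator_mult_shift_le[where \<delta>=\<delta>]) (simp_all add: \<psi>_bound \<delta> \<open>\<epsilon> > 0\<close>)
    ultimately show ?thesis by (simp add: w_def)
  qed
  have "\<bar>\<integral>x. \<bar>w n (T x) - w n x\<bar> \<partial>M\<bar> \<le> \<epsilon> + r n" for n
  proof -
    have w_bound: "\<bar>w n y\<bar> \<le> B" for y
      using \<psi>_bound[of "F n y"] \<open>0 \<le> B\<close> by (auto simp: w_def indicator_def)
    have "\<bar>w n (T x) - w n x\<bar> \<le> 2 * B" for x
      using w_bound[of "T x"] w_bound[of x] by (auto simp: abs_le_iff)
    then have "integrable M (\<lambda>x. \<bar>w n (T x) - w n x\<bar>)"
      by (intro integrable_const_bound[where B="2 * B"] AE_I2) auto
    then have "(\<integral>x. \<bar>w n (T x) - w n x\<bar> \<partial>M)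
        \<le> (\<integral>x. \<epsilon> + B * indicator (S n) x + 2 * B * indicator (E n) x \<partial>M)"
      using pointwise by (intro integral_mono) (auto simp: emeasure_eq_measure)
    also have "\<dots> = \<epsilon> + r n"
      by (simp add: r_def prob_space emeasure_eq_measure)
    finally show ?thesis by simp
  qed
  with r_lim show "\<exists>r. r \<longlonglongrightarrow> 0 \<and> (\<forall>n. \<bar>\<integral>x. \<bar>indicator (W n) (T x) * \<psi> (F n (T x)) - indicator (W n) x * \<psi> (F n x)\<bar> \<partial>M\<bar> \<le> \<epsilon> + r n)"
    unfolding w_def by blast
qed

lemma ergodic_set_integral_tendsto:
  fixes F :: "nat \<Rightarrow> 'a \<Rightarrow> 'b::{metric_space, second_countable_topology}" and \<psi> :: "'b \<Rightarrow> real"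
  assumes "prob_space M" and aut: "mp_automorphism M T" and erg: "ergodic M T"
    and W[measurable]: "\<And>n. W n \<in> sets M"
    and W_measure: "(\<lambda>n. measure M (W n)) \<longlonglongrightarrow> \<alpha>" and "\<alpha> > 0"
    and W_invariant: "(\<lambda>n. measure M (symdiff (W n) (T -` W n \<inter> space M))) \<longlonglongrightarrow> 0"
    and F[measurable]: "\<And>n. F n \<in> borel_measurable M"
    and F_invariant: "\<And>\<delta>. \<delta> > 0 \<Longrightarrow>
      (\<lambda>n. measure M (W n \<inter> {x \<in> space M. \<delta> \<le> dist (F n (T x)) (F n x)})) \<longlonglongrightarrow> 0"
    and conv: "weak_conv_measures (\<lambda>n. distr (cond_measure M (W n)) borel (F n)) P"
    and \<psi>_bound: "\<And>z. \<bar>\<psi> z\<bar> \<le> B" and \<psi>_uc: "uniformly_continuous_on UNIV \<psi>"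
    and k: "integrable M k"
  shows "(\<lambda>n. \<integral>x. indicator (W n) x * \<psi> (F n x) * k x \<partial>M) \<longlonglongrightarrow> \<alpha> * (\<integral>z. \<psi> z \<partial>P) * (\<integral>x. k x \<partial>M)"
proof (rule ergodic_weighted_integral_tendsto[OF \<open>prob_space M\<close> aut erg _ _ _ _ k])
  interpret prob_space M by fact
  have \<psi>_cont: "continuous_on UNIV \<psi>"
    by (rule uniformly_continuous_imp_continuous[OF \<psi>_uc])
  then have [measurable]: "\<psi> \<in> borel_measurable borel"
    by (rule borel_measurable_continuous_onI)
  show "(\<lambda>x. indicator (W n) x * \<psi> (F n x)) \<in> borel_measurable M" for n
    by measurable
  show "\<bar>indicator (W n) x * \<psi> (F n x)\<bar> \<le> B" for n x
    using \<psi>_bound[of "F n x"] \<psi>_bound[of undefined] by (auto simp: indicator_def)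
  show "(\<lambda>n. \<integral>x. indicator (W n) x * \<psi> (F n x) \<partial>M) \<longlonglongrightarrow> \<alpha> * (\<integral>z. \<psi> z \<partial>P)"
    using \<psi>_bound
    by (intro set_integral_tendsto_of_weak_conv[OF finite_measure_axioms W W_measure \<open>\<alpha> > 0\<close> F conv \<psi>_cont])
       (auto intro!: boundedI[where B=B])
  show "(\<lambda>n. \<integral>x. \<bar>indicator (W n) (T x) * \<psi> (F n (T x)) - indicator (W n) x * \<psi> (F n x)\<bar> \<partial>M)
      \<longlonglongrightarrow> 0"
    by (rule set_weight_shift_tendsto_zero[OF \<open>prob_space M\<close> mp_automorphism_measurable[OF aut]
          W W_invariant F F_invariant \<psi>_bound \<psi>_uc])
qed

section \<open>Shifting by a measurable function\<close>

lemma tendsto_of_uniform_approximation: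
  fixes a :: "nat \<Rightarrow> real"
  assumes "\<And>\<epsilon>. \<epsilon> > 0 \<Longrightarrow> \<exists>c d. c \<longlonglongrightarrow> d \<and> (\<forall>n. \<bar>a n - c n\<bar> \<le> \<epsilon>) \<and> \<bar>b - d\<bar> \<le> \<epsilon>"
  shows "a \<longlonglongrightarrow> b"
proof (rule tendstoI)
  fix e :: real assume "e > 0"
  then obtain c d where cd: "c \<longlonglongrightarrow> d" "\<And>n. \<bar>a n - c n\<bar> \<le> e / 3" "\<bar>b - d\<bar> \<le> e / 3"
    using assms[of "e / 3"] by auto
  have "eventually (\<lambda>n. dist (c n) d < e / 3) sequentially"
    using cd(1) \<open>e > 0\<close> by (intro tendstoD) auto
  then show "eventually (\<lambda>n. dist (a n) b < e) sequentially"
  proof eventually_elim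
    case (elim n)
    have "\<bar>a n - b\<bar> \<le> \<bar>a n - c n\<bar> + \<bar>c n - d\<bar> + \<bar>b - d\<bar>" by linarith
    then show ?case using elim cd(2)[of n] cd(3) by (simp add: dist_real_def)
  qed
qed

lemma uniformly_continuous_on_shift:
  fixes \<phi> :: "'b::real_normed_vector \<Rightarrow> 'c::metric_space"
  assumes "uniformly_continuous_on UNIV \<phi>"
  shows "uniformly_continuous_on UNIV (\<lambda>z. \<phi> (z + c))"
proof (rule uniformly_continuous_on_compose[of UNIV "\<lambda>z. z + c"])
  have "range (\<lambda>z. z + c) = UNIV"
    by (metis surj_def diff_add_cancel)
  then show "uniformly_continuous_on (range (\<lambda>z. z + c)) \<phi>" using assms by simp
qed (intro continuous_intros)

lemma integral_mult_diff_le: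
  fixes a b g :: "'a \<Rightarrow> real"
  assumes "prob_space M"
    and ag: "integrable M (\<lambda>x. a x * g x)" and bg: "integrable M (\<lambda>x. b x * g x)"
    and E[measurable]: "E \<in> sets M" and g: "AE x in M. \<bar>g x\<bar> \<le> G"
    and ab: "\<And>x. x \<in> space M \<Longrightarrow> \<bar>a x - b x\<bar> \<le> \<eta> + D * indicator E x"
  shows "\<bar>(\<integral>x. a x * g x \<partial>M) - (\<integral>x. b x * g x \<partial>M)\<bar> \<le> G * (\<eta> + D * measure M E)"
proof -
  interpret prob_space M by fact
  have "\<bar>(\<integral>x. a x * g x \<partial>M) - (\<integral>x. b x * g x \<partial>M)\<bar> = \<bar>\<integral>x. (a x - b x) * g x \<partial>M\<bar>"
    using ag bg by (simp add: left_diff_distrib)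
  also have "\<dots> \<le> (\<integral>x. \<bar>(a x - b x) * g x\<bar> \<partial>M)"
    by (rule integral_abs_bound)
  also have "\<dots> \<le> (\<integral>x. G * (\<eta> + D * indicator E x) \<partial>M)"
  proof (rule integral_mono_AE)
    show "AE x in M. \<bar>(a x - b x) * g x\<bar> \<le> G * (\<eta> + D * indicator E x)"
      using g AE_space
    proof eventually_elim
      case (elim x)
      have "\<bar>(a x - b x) * g x\<bar> \<le> (\<eta> + D * indicator E x) * G"
        unfolding abs_mult using ab[OF elim(2)] elim(1) by (intro mult_mono) auto
      then show ?case by (simp add: mult.commute)
    qed
  qed (use ag bg in \<open>auto simp: left_diff_distrib emeasure_eq_measure\<close>)
  also have "\<dots> = G * (\<eta> + D * measure M E)"
    by (simp add: prob_space emeasure_eq_measure)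
  finally show ?thesis .
qed

lemma pointwise_convergence_imp_in_measure:
  fixes s :: "nat \<Rightarrow> 'a \<Rightarrow> 'b::{metric_space, second_countable_topology}"
  assumes "finite_measure M" and [measurable]: "\<And>i. s i \<in> borel_measurable M" "v \<in> borel_measurable M"
    and lim: "\<And>x. x \<in> space M \<Longrightarrow> (\<lambda>i. s i x) \<longlonglongrightarrow> v x" and "\<delta> > 0"
  shows "(\<lambda>i. measure M {x \<in> space M. \<delta> \<le> dist (s i x) (v x)}) \<longlonglongrightarrow> 0"
proof -
  interpret finite_measure M by fact
  have "(\<lambda>i. \<integral>x. indicator {x \<in> space M. \<delta> \<le> dist (s i x) (v x)} x \<partial>M) \<longlonglongrightarrow> (\<integral>x. 0 \<partial>M :: real)"
  proof (rule integral_dominated_convergence[where w="\<lambda>_. 1"])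
    show "AE x in M. (\<lambda>i. indicator {x \<in> space M. \<delta> \<le> dist (s i x) (v x)} x) \<longlonglongrightarrow> (0::real)"
    proof (rule AE_I2)
      fix x assume "x \<in> space M"
      have "eventually (\<lambda>i. dist (s i x) (v x) < \<delta>) sequentially"
        using tendstoD[OF lim[OF \<open>x \<in> space M\<close>] \<open>\<delta> > 0\<close>] .
      then have "eventually (\<lambda>i. indicator {x \<in> space M. \<delta> \<le> dist (s i x) (v x)} x = (0::real)) sequentially"
        by eventually_elim (simp add: not_le)
      then show "(\<lambda>i. indicator {x \<in> space M. \<delta> \<le> dist (s i x) (v x)} x) \<longlonglongrightarrow> (0::real)"
        by (rule tendsto_eventually)
    qed
  qed (auto simp: indicator_def)
  then show ?thesis by (simp add: emeasure_eq_measure)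
qed

lemma simple_function_uniformly_close:
  fixes \<phi> :: "'b::{real_normed_vector, second_countable_topology} \<Rightarrow> real" and v :: "'a \<Rightarrow> 'b"
  assumes "finite_measure M" and \<phi>_bound: "\<And>z. \<bar>\<phi> z\<bar> \<le> B" and \<phi>_uc: "uniformly_continuous_on UNIV \<phi>"
    and v[measurable]: "v \<in> borel_measurable M" and "\<eta> > 0" and "\<gamma> > 0"
  shows "\<exists>s E. simple_function M s \<and> E \<in> sets M \<and> measure M E < \<gamma> \<and>
    (\<forall>x\<in>space M. \<forall>z. \<bar>\<phi> (z + v x) - \<phi> (z + s x)\<bar> \<le> \<eta> + 2 * B * indicator E x)"
proof -
  obtain s where s: "\<And>i. simple_function M (s i)"
    and s_lim: "\<And>x. x \<in> space M \<Longrightarrow> (\<lambda>i. s i x) \<longlonglongrightarrow> v x"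
    using borel_measurable_implies_sequence_metric[OF v, of 0] by blast
  have [measurable]: "s i \<in> borel_measurable M" for i
    using s by (rule borel_measurable_simple_function)
  obtain \<delta> where "\<delta> > 0" and \<delta>: "\<And>y z. dist y z < \<delta> \<Longrightarrow> dist (\<phi> y) (\<phi> z) < \<eta>"
    using \<phi>_uc \<open>\<eta> > 0\<close> unfolding uniformly_continuous_on_def by (metis UNIV_I)
  define E where "E i = {x \<in> space M. \<delta> \<le> dist (s i x) (v x)}" for i
  have "(\<lambda>i. measure M (E i)) \<longlonglongrightarrow> 0"
    unfolding E_def using \<open>\<delta> > 0\<close>
    by (intro pointwise_convergence_imp_in_measure[OF \<open>finite_measure M\<close> _ v s_lim]) simp_all
  then obtain i where i: "measure M (E i) < \<gamma>"
    using \<open>\<gamma> > 0\<close> by (metis LIMSEQ_le_const not_le order.refl)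
  have "\<bar>\<phi> (z + v x) - \<phi> (z + s i x)\<bar> \<le> \<eta> + 2 * B * indicator (E i) x" if "x \<in> space M" for x z
  proof (cases "x \<in> E i")
    case True
    then show ?thesis
      using \<phi>_bound[of "z + v x"] \<phi>_bound[of "z + s i x"] \<open>\<eta> > 0\<close> by (simp add: abs_le_iff)
  next
    case False
    then have "dist (z + v x) (z + s i x) < \<delta>"
      using that by (simp add: E_def dist_norm dist_commute norm_minus_commute)
    then have "dist (\<phi> (z + v x)) (\<phi> (z + s i x)) < \<eta>" by (rule \<delta>)
    with False show ?thesis by (simp add: dist_real_def)
  qed
  moreover have "E i \<in> sets M" unfolding E_def by measurable
  ultimately show ?thesis using s i by blast
qed

locale asymptotically_invariant_weak_limit =
  fixes M :: "'a measure" and T :: "'a \<Rightarrow> 'a" and W :: "nat \<Rightarrow> 'a set" and \<alpha> :: real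
    and F :: "nat \<Rightarrow> 'a \<Rightarrow> 'b::{real_normed_vector, second_countable_topology}"
    and P :: "'b measure"
  assumes M_prob: "prob_space M" and aut: "mp_automorphism M T" and erg: "ergodic M T"
    and W[measurable]: "\<And>n. W n \<in> sets M"
    and W_measure: "(\<lambda>n. measure M (W n)) \<longlonglongrightarrow> \<alpha>" and \<alpha>_pos: "\<alpha> > 0"
    and W_invariant: "(\<lambda>n. measure M (symdiff (W n) (T -` W n \<inter> space M))) \<longlonglongrightarrow> 0"
    and F[measurable]: "\<And>n. F n \<in> borel_measurable M"
    and F_invariant: "\<And>\<delta>. \<delta> > 0 \<Longrightarrow>
      (\<lambda>n. measure M (W n \<inter> {x \<in> space M. \<delta> \<le> dist (F n (T x)) (F n x)})) \<longlonglongrightarrow> 0"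
    and conv: "weak_conv_measures (\<lambda>n. distr (cond_measure M (W n)) borel (F n)) P"
    and P_prob: "prob_space P" and sets_P[measurable_cong]: "sets P = sets borel"
begin

lemma \<alpha>_le_1: "\<alpha> \<le> 1"
  using W_measure prob_space.prob_le_1[OF M_prob] by (intro LIMSEQ_le_const2) auto

lemma shifted_integral_bound:
  fixes \<phi> :: "'b \<Rightarrow> real"
  assumes "\<And>z. \<bar>\<phi> z\<bar> \<le> B" and "\<phi> \<in> borel_measurable borel"
  shows "\<bar>\<integral>z. \<phi> (z + c) \<partial>P\<bar> \<le> B"
proof -
  interpret P: prob_space P by (rule P_prob)
  have "integrable P (\<lambda>z. \<phi> (z + c))"
    using assms by (intro P.integrable_const_bound[where B=B]) auto
  then have "\<bar>\<integral>z. \<phi> (z + c) \<partial>P\<bar> \<le> (\<integral>z. B \<partial>P)"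
    using assms(1) by (intro integral_abs_bound[THEN order_trans] integral_mono) auto
  then show ?thesis by (simp add: P.prob_space)
qed

lemma tendsto_shifted_set_integral_finite_range:
  fixes \<phi> :: "'b \<Rightarrow> real" and v :: "'a \<Rightarrow> 'b" and g :: "'a \<Rightarrow> real"
  assumes \<phi>_bound: "\<And>z. \<bar>\<phi> z\<bar> \<le> B" and \<phi>_uc: "uniformly_continuous_on UNIV \<phi>"
    and v[measurable]: "v \<in> borel_measurable M" and v_finite: "finite (v ` space M)"
    and g[measurable]: "g \<in> borel_measurable M" and g_bound: "AE x in M. \<bar>g x\<bar> \<le> G"
  shows "(\<lambda>n. \<integral>x. indicator (W n) x * \<phi> (F n x + v x) * g x \<partial>M)
    \<longlonglongrightarrow> \<alpha> * (\<integral>x. (\<integral>z. \<phi> (z + v x) \<partial>P) * g x \<partial>M)"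
proof -
  interpret prob_space M by (rule M_prob)
  have [measurable]: "\<phi> \<in> borel_measurable borel"
    using \<phi>_uc by (intro borel_measurable_continuous_onI uniformly_continuous_imp_continuous)
  have "0 \<le> B" using \<phi>_bound[of 0] by (rule order_trans[OF abs_ge_zero])
  from g_bound have "AE x in M. 0 \<le> G" by eventually_elim (rule order_trans[OF abs_ge_zero])
  then have "0 \<le> G" by simp
  \<comment> \<open>split \<open>g\<close> along the level sets of \<open>v\<close>\<close>
  define k where "k c x = g x * indicator {x \<in> space M. v x = c} x" for c x
  have [measurable]: "k c \<in> borel_measurable M" for c unfolding k_def by measurable
  have k_integrable: "integrable M (k c)" for c
    using g_bound \<open>0 \<le> G\<close>
    by (intro integrable_const_bound[where B=G]) (auto elim!: eventually_mono simp: k_def indicator_def)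
  have level_sum: "(\<Sum>c\<in>v ` space M. A c * k c x) = A (v x) * g x" if "x \<in> space M"
    for A :: "'b \<Rightarrow> real" and x
  proof -
    have "(\<Sum>c\<in>v ` space M. A c * k c x) = (\<Sum>c\<in>v ` space M. if c = v x then A c * g x else 0)"
      by (rule sum.cong) (use that in \<open>auto simp: k_def\<close>)
    also have "\<dots> = A (v x) * g x"
      using that v_finite by (simp add: sum.delta)
    finally show ?thesis .
  qed
  have level_limit: "(\<lambda>n. \<integral>x. indicator (W n) x * \<phi> (F n x + c) * k c x \<partial>M)
      \<longlonglongrightarrow> \<alpha> * (\<integral>z. \<phi> (z + c) \<partial>P) * (\<integral>x. k c x \<partial>M)" for c
    by (rule ergodic_set_integral_tendsto[where B=B, OF M_prob aut erg W W_measure \<alpha>_pos W_invariant F _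
          conv _ uniformly_continuous_on_shift[OF \<phi>_uc] k_integrable]) (simp_all add: F_invariant \<phi>_bound)
  have "(\<integral>x. indicator (W n) x * \<phi> (F n x + v x) * g x \<partial>M)
      = (\<Sum>c\<in>v ` space M. \<integral>x. indicator (W n) x * \<phi> (F n x + c) * k c x \<partial>M)" for n
  proof -
    have "(\<integral>x. indicator (W n) x * \<phi> (F n x + v x) * g x \<partial>M)
        = (\<integral>x. (\<Sum>c\<in>v ` space M. indicator (W n) x * \<phi> (F n x + c) * k c x) \<partial>M)"
      using level_sum[of _ "\<lambda>c. indicator (W n) _ * \<phi> (F n _ + c)"]
      by (intro Bochner_Integration.integral_cong) auto
    also have "\<dots> = (\<Sum>c\<in>v ` space M. \<integral>x. indicator (W n) x * \<phi> (F n x + c) * k c x \<partial>M)"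
      using \<phi>_bound \<open>0 \<le> B\<close> k_integrable
      by (intro Bochner_Integration.integral_sum integrable_bounded_mult[where C=B])
         (auto simp: indicator_def)
    finally show ?thesis .
  qed
  moreover have "\<alpha> * (\<integral>x. (\<integral>z. \<phi> (z + v x) \<partial>P) * g x \<partial>M)
      = (\<Sum>c\<in>v ` space M. \<alpha> * (\<integral>z. \<phi> (z + c) \<partial>P) * (\<integral>x. k c x \<partial>M))"
  proof -
    have "(\<integral>x. (\<integral>z. \<phi> (z + v x) \<partial>P) * g x \<partial>M)
        = (\<integral>x. (\<Sum>c\<in>v ` space M. (\<integral>z. \<phi> (z + c) \<partial>P) * k c x) \<partial>M)"
      using level_sum[of _ "\<lambda>c. \<integral>z. \<phi> (z + c) \<partial>P"]
      by (intro Bochner_Integration.integral_cong) auto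
    also have "\<dots> = (\<Sum>c\<in>v ` space M. (\<integral>z. \<phi> (z + c) \<partial>P) * (\<integral>x. k c x \<partial>M))"
      using k_integrable by (simp add: Bochner_Integration.integral_sum)
    finally show ?thesis by (simp add: sum_distrib_left mult.assoc)
  qed
  ultimately show ?thesis
    by (simp only:) (intro tendsto_sum level_limit)
qed

lemma shifted_set_integrals_close:
  fixes \<phi> :: "'b \<Rightarrow> real" and v v' :: "'a \<Rightarrow> 'b" and g :: "'a \<Rightarrow> real"
  assumes \<phi>_bound: "\<And>z. \<bar>\<phi> z\<bar> \<le> B" and [measurable]: "\<phi> \<in> borel_measurable borel"
    and [measurable]: "v \<in> borel_measurable M" "v' \<in> borel_measurable M"
    and [measurable]: "g \<in> borel_measurable M" and g_bound: "AE x in M. \<bar>g x\<bar> \<le> G"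
    and [measurable]: "E \<in> sets M"
    and close: "\<And>x z. x \<in> space M \<Longrightarrow> \<bar>\<phi> (z + v x) - \<phi> (z + v' x)\<bar> \<le> \<eta> + D * indicator E x"
  shows "\<bar>(\<integral>x. indicator (W n) x * \<phi> (F n x + v x) * g x \<partial>M)
      - (\<integral>x. indicator (W n) x * \<phi> (F n x + v' x) * g x \<partial>M)\<bar> \<le> G * (\<eta> + D * measure M E)"
    and "\<bar>(\<integral>x. (\<integral>z. \<phi> (z + v x) \<partial>P) * g x \<partial>M) - (\<integral>x. (\<integral>z. \<phi> (z + v' x) \<partial>P) * g x \<partial>M)\<bar>
      \<le> G * (\<eta> + D * measure M E)"
proof -
  interpret prob_space M by (rule M_prob)
  interpret P: prob_space P by (rule P_prob)
  have "0 \<le> B" using \<phi>_bound[of 0] by (rule order_trans[OF abs_ge_zero])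
  have g_integrable: "integrable M g"
    using g_bound by (intro integrable_const_bound[where B=G]) auto
  have lhs_integrable: "integrable M (\<lambda>x. indicator (W n) x * \<phi> (F n x + u x) * g x)"
    if [measurable]: "u \<in> borel_measurable M" for u
    using \<phi>_bound \<open>0 \<le> B\<close>
    by (intro integrable_bounded_mult[OF _ _ g_integrable, where C=B]) (auto simp: indicator_def)
  show "\<bar>(\<integral>x. indicator (W n) x * \<phi> (F n x + v x) * g x \<partial>M)
      - (\<integral>x. indicator (W n) x * \<phi> (F n x + v' x) * g x \<partial>M)\<bar> \<le> G * (\<eta> + D * measure M E)"
  proof (rule integral_mult_diff_le[OF M_prob lhs_integrable lhs_integrable _ g_bound])
    show "\<bar>indicator (W n) x * \<phi> (F n x + v x) - indicator (W n) x * \<phi> (F n x + v' x)\<bar>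
        \<le> \<eta> + D * indicator E x" if "x \<in> space M" for x
      using close[OF that, of "F n x"] by (auto simp: indicator_def)
  qed simp_all
  have P_integrable: "integrable P (\<lambda>z. \<phi> (z + c))" for c
    using \<phi>_bound by (intro P.integrable_const_bound[where B=B]) auto
  have rhs_integrable: "integrable M (\<lambda>x. (\<integral>z. \<phi> (z + u x) \<partial>P) * g x)"
    if [measurable]: "u \<in> borel_measurable M" for u
  proof (intro integrable_bounded_mult[OF _ _ g_integrable, where C=B])
    show "\<bar>\<integral>z. \<phi> (z + u x) \<partial>P\<bar> \<le> B" for x
      by (rule shifted_integral_bound) (simp_all add: \<phi>_bound)
  qed measurable
  show "\<bar>(\<integral>x. (\<integral>z. \<phi> (z + v x) \<partial>P) * g x \<partial>M) - (\<integral>x. (\<integral>z. \<phi> (z + v' x) \<partial>P) * g x \<partial>M)\<bar>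
      \<le> G * (\<eta> + D * measure M E)"
  proof (rule integral_mult_diff_le[OF M_prob rhs_integrable rhs_integrable _ g_bound])
    fix x assume "x \<in> space M"
    have "\<bar>(\<integral>z. \<phi> (z + v x) \<partial>P) - (\<integral>z. \<phi> (z + v' x) \<partial>P)\<bar> = \<bar>\<integral>z. \<phi> (z + v x) - \<phi> (z + v' x) \<partial>P\<bar>"
      using P_integrable by simp
    also have "\<dots> \<le> (\<integral>z. \<eta> + D * indicator E x \<partial>P)"
      using close[OF \<open>x \<in> space M\<close>] P_integrable
      by (intro integral_abs_bound[THEN order_trans] integral_mono) auto
    finally show "\<bar>(\<integral>z. \<phi> (z + v x) \<partial>P) - (\<integral>z. \<phi> (z + v' x) \<partial>P)\<bar> \<le> \<eta> + D * indicator E x"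
      by (simp add: P.prob_space)
  qed simp_all
qed

lemma tendsto_shifted_set_integral:
  fixes \<phi> :: "'b \<Rightarrow> real" and v :: "'a \<Rightarrow> 'b" and g :: "'a \<Rightarrow> real"
  assumes \<phi>_bound: "\<And>z. \<bar>\<phi> z\<bar> \<le> B" and \<phi>_uc: "uniformly_continuous_on UNIV \<phi>"
    and v[measurable]: "v \<in> borel_measurable M"
    and g[measurable]: "g \<in> borel_measurable M" and g_bound: "AE x in M. \<bar>g x\<bar> \<le> G"
  shows "(\<lambda>n. \<integral>x. indicator (W n) x * \<phi> (F n x + v x) * g x \<partial>M)
    \<longlonglongrightarrow> \<alpha> * (\<integral>x. (\<integral>z. \<phi> (z + v x) \<partial>P) * g x \<partial>M)"
proof (rule tendsto_of_uniform_approximation)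
  interpret prob_space M by (rule M_prob)
  have [measurable]: "\<phi> \<in> borel_measurable borel"
    using \<phi>_uc by (intro borel_measurable_continuous_onI uniformly_continuous_imp_continuous)
  have "0 \<le> B" using \<phi>_bound[of 0] by (rule order_trans[OF abs_ge_zero])
  from g_bound have "AE x in M. 0 \<le> G" by eventually_elim (rule order_trans[OF abs_ge_zero])
  then have "0 \<le> G" by simp
  fix \<epsilon> :: real assume "\<epsilon> > 0"
  define \<eta> where "\<eta> = \<epsilon> / (2 * (G + 1))"
  have "\<eta> > 0" and "G * \<eta> \<le> \<epsilon> / 2"
    using \<open>\<epsilon> > 0\<close> \<open>0 \<le> G\<close> by (simp_all add: \<eta>_def field_simps)
  define K where "K = 2 * B * G + 1"
  have "K > 0" using mult_nonneg_nonneg[OF \<open>0 \<le> B\<close> \<open>0 \<le> G\<close>] by (simp add: K_def)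
  then have "\<epsilon> / (2 * K) > 0" using \<open>\<epsilon> > 0\<close> by simp
  from simple_function_uniformly_close[OF finite_measure_axioms \<phi>_bound \<phi>_uc v \<open>\<eta> > 0\<close> this]
  obtain s E where s: "simple_function M s" and [measurable]: "E \<in> sets M"
    and E: "measure M E < \<epsilon> / (2 * K)"
    and close: "\<forall>x\<in>space M. \<forall>z. \<bar>\<phi> (z + v x) - \<phi> (z + s x)\<bar> \<le> \<eta> + 2 * B * indicator E x"
    by blast
  have [measurable]: "s \<in> borel_measurable M"
    using s by (rule borel_measurable_simple_function)
  have "G * (2 * B) * measure M E \<le> K * measure M E"
    by (intro mult_right_mono) (simp_all add: K_def)
  also have "\<dots> \<le> \<epsilon> / 2"
    using E \<open>K > 0\<close> by (simp add: field_simps)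
  finally have "G * (2 * B) * measure M E \<le> \<epsilon> / 2" .
  with \<open>G * \<eta> \<le> \<epsilon> / 2\<close> have error: "G * (\<eta> + 2 * B * measure M E) \<le> \<epsilon>"
    by (simp add: algebra_simps)
  note close_integrals = shifted_set_integrals_close[OF \<phi>_bound _ v _ g g_bound _ close[rule_format], simplified]
  have "(\<lambda>n. \<integral>x. indicator (W n) x * \<phi> (F n x + s x) * g x \<partial>M)
      \<longlonglongrightarrow> \<alpha> * (\<integral>x. (\<integral>z. \<phi> (z + s x) \<partial>P) * g x \<partial>M)"
    by (rule tendsto_shifted_set_integral_finite_range[OF \<phi>_bound \<phi>_uc _ simple_functionD(1)[OF s] g g_bound])
       measurable
  moreover have "\<bar>(\<integral>x. indicator (W n) x * \<phi> (F n x + v x) * g x \<partial>M)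
      - (\<integral>x. indicator (W n) x * \<phi> (F n x + s x) * g x \<partial>M)\<bar> \<le> \<epsilon>" for n
    using close_integrals(1) error by (rule order_trans)
  moreover have "\<bar>\<alpha> * (\<integral>x. (\<integral>z. \<phi> (z + v x) \<partial>P) * g x \<partial>M) - \<alpha> * (\<integral>x. (\<integral>z. \<phi> (z + s x) \<partial>P) * g x \<partial>M)\<bar>
      \<le> \<epsilon>"
  proof -
    have "\<alpha> * \<bar>(\<integral>x. (\<integral>z. \<phi> (z + v x) \<partial>P) * g x \<partial>M) - (\<integral>x. (\<integral>z. \<phi> (z + s x) \<partial>P) * g x \<partial>M)\<bar>
        \<le> 1 * \<epsilon>"
      using close_integrals(2) error \<alpha>_pos \<alpha>_le_1 by (intro mult_mono) auto
    then show ?thesis using \<alpha>_pos by (simp add: abs_mult right_diff_distrib[symmetric])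
  qed
  ultimately show "\<exists>c d. c \<longlonglongrightarrow> d \<and> (\<forall>n. \<bar>(\<integral>x. indicator (W n) x * \<phi> (F n x + v x) * g x \<partial>M) - c n\<bar> \<le> \<epsilon>) \<and>
      \<bar>\<alpha> * (\<integral>x. (\<integral>z. \<phi> (z + v x) \<partial>P) * g x \<partial>M) - d\<bar> \<le> \<epsilon>"
    by blast
qed

end

section \<open>Birkhoff sums\<close>

lemma measurable_birkhoff_sum[measurable]:
  assumes "T \<in> measurable M M" and "f \<in> borel_measurable M"
  shows "birkhoff_sum T f n \<in> borel_measurable M"
proof -
  have [measurable]: "(T ^^ i) \<in> measurable M M" for i by (rule measurable_funpow[OF assms(1)])
  show ?thesis unfolding birkhoff_sum_def[abs_def] using assms(2) by measurable
qed

lemma birkhoff_sum_shift: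
  "birkhoff_sum T f n (T x) = birkhoff_sum T f n x + f ((T ^^ n) x) - f x"
  by (induction n) (simp_all add: birkhoff_sum_def funpow_Suc_right del: funpow.simps)

lemma rigidity_along_birkhoff_pair:
  fixes f :: "'a \<Rightarrow> real" and a a' :: "nat \<Rightarrow> real"
  assumes "finite_measure M" and T[measurable]: "T \<in> measurable M M"
    and rig: "rigidity_along M T q W" and rig': "rigidity_along M T q' W"
    and W[measurable]: "\<And>n. W n \<in> sets M" and f[measurable]: "f \<in> borel_measurable M"
    and "\<delta> > 0"
  defines "F n x \<equiv> (birkhoff_sum T f (q' n) x - a' n, birkhoff_sum T f (q n) x - a n)"
  shows "(\<lambda>n. measure M (W n \<inter> {x \<in> space M. \<delta> \<le> dist (F n (T x)) (F n x)})) \<longlonglongrightarrow> 0"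
proof -
  interpret finite_measure M by fact
  have [measurable]: "(T ^^ i) \<in> measurable M M" for i by (rule measurable_funpow[OF T])
  define E where "E p n = W n \<inter> {x \<in> space M. \<delta> / 2 \<le> \<bar>f ((T ^^ p n) x) - f x\<bar>}" for p n
  have [measurable]: "E p n \<in> sets M" for p n unfolding E_def by measurable
  have "W n \<inter> {x \<in> space M. \<delta> \<le> dist (F n (T x)) (F n x)} \<subseteq> E q' n \<union> E q n" for n
  proof safe
    fix x assume x: "x \<in> W n" "x \<in> space M" "\<delta> \<le> dist (F n (T x)) (F n x)" "x \<notin> E q n"
    have "dist (F n (T x)) (F n x) \<le> \<bar>f ((T ^^ q' n) x) - f x\<bar> + \<bar>f ((T ^^ q n) x) - f x\<bar>"
      using norm_Pair_le[of "f ((T ^^ q' n) x) - f x" "f ((T ^^ q n) x) - f x"]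
      by (simp add: F_def birkhoff_sum_shift dist_norm)
    with x show "x \<in> E q' n" by (auto simp: E_def)
  qed
  then have bound: "measure M (W n \<inter> {x \<in> space M. \<delta> \<le> dist (F n (T x)) (F n x)})
      \<le> measure M (E q' n) + measure M (E q n)" for n
    by (rule finite_measure_mono[THEN order_trans]) (simp_all add: measure_Un_le)
  have "(\<lambda>n. measure M (E q' n) + measure M (E q n)) \<longlonglongrightarrow> 0 + 0"
    unfolding E_def using \<open>\<delta> > 0\<close>
    by (intro tendsto_add rigidity_along_tendsto_measure[OF \<open>finite_measure M\<close> T _ W f]
          rig rig') simp_all
  then have "(\<lambda>n. measure M (E q' n) + measure M (E q n)) \<longlonglongrightarrow> 0" by simp
  then show ?thesis
    by (rule Lim_null_comparison[OF always_eventually, rotated]) (simp add: bound)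
qed

theorem theorem3p4:
  fixes M :: "'a::polish_space measure" and T :: "'a \<Rightarrow> 'a"
    and f :: "'a \<Rightarrow> real" and c :: real
    and W :: "nat \<Rightarrow> 'a set" and q q' :: "nat \<Rightarrow> nat" and a a' :: "nat \<Rightarrow> real"
    and \<alpha> :: real and P :: "(real \<times> real) measure"
    and h h' g :: "'a \<Rightarrow> real" and \<phi> :: "real \<times> real \<Rightarrow> real"
  assumes std: "standard_borel_prob M"
    and aut: "mp_automorphism M T"
    and erg: "ergodic M T"
    and nonatom: "non_atomic M"
    and f_meas: "f \<in> borel_measurable M"
    and f_L2: "integrable M (\<lambda>x. (f x)\<^sup>2)"
    and c_pos: "c > 0"
    and f_ge: "AE x in M. f x \<ge> c"
    and W_sets: "\<And>n. W n \<in> sets M"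
    and q_mono: "strict_mono q" and q'_mono: "strict_mono q'"
    and \<alpha>_pos: "0 < \<alpha>" and \<alpha>_le: "\<alpha> \<le> 1"
    and P_prob: "prob_space P" and P_sets: "sets P = sets (borel :: (real \<times> real) measure)"
    and C1: "(\<lambda>n. measure M (W n)) \<longlonglongrightarrow> \<alpha>"
    and C2: "(\<lambda>n. measure M (symdiff (W n) (T -` W n \<inter> space M))) \<longlonglongrightarrow> 0"
    and C3: "rigidity_along M T q W"
    and C4: "rigidity_along M T q' W"
    and C5: "\<exists>B::real. \<forall>n. (\<integral>\<^sup>+x. indicator (W n) x *
               ennreal ((birkhoff_sum T f (q n) x - a n)\<^sup>2) \<partial>M) \<le> ennreal B"
    and C6: "\<exists>B::real. \<forall>n. (\<integral>\<^sup>+x. indicator (W n) x *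
               ennreal ((birkhoff_sum T f (q' n) x - a' n)\<^sup>2) \<partial>M) \<le> ennreal B"
    and C7: "weak_conv_measures
               (\<lambda>n. distr (cond_measure M (W n)) (borel :: (real \<times> real) measure)
                  (\<lambda>x. (birkhoff_sum T f (q' n) x - a' n, birkhoff_sum T f (q n) x - a n))) P"
    and h_meas: "h \<in> borel_measurable M" and h'_meas: "h' \<in> borel_measurable M"
    and g_meas: "g \<in> borel_measurable M"
    and g_Linf: "\<exists>B. AE x in M. \<bar>g x\<bar> \<le> B"
    and \<phi>_bdd: "bounded (range \<phi>)"
    and \<phi>_uc: "uniformly_continuous_on UNIV \<phi>"
  shows "(\<lambda>n. set_lebesgue_integral M (W n) (\<lambda>x.
            \<phi> (birkhoff_sum T f (q' n) x - a' n + h' x, birkhoff_sum T f (q n) x - a n + h x) * g x))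
         \<longlonglongrightarrow> \<alpha> * (\<integral>x. (\<integral>tu. \<phi> (fst tu + h' x, snd tu + h x) * g x \<partial>P) \<partial>M)"
proof -
  have M: "prob_space M" using std by (simp add: standard_borel_prob_def)
  then interpret prob_space M .
  have T[measurable]: "T \<in> measurable M M" by (rule mp_automorphism_measurable[OF aut])
  note [measurable] = f_meas h_meas h'_meas g_meas W_sets
  define F where "F n x = (birkhoff_sum T f (q' n) x - a' n, birkhoff_sum T f (q n) x - a n)" for n x
  have F_meas: "F n \<in> borel_measurable M" for n unfolding F_def by measurable
  have F_invariant: "(\<lambda>n. measure M (W n \<inter> {x \<in> space M. \<delta> \<le> dist (F n (T x)) (F n x)})) \<longlonglongrightarrow> 0"
    if "\<delta> > 0" for \<delta>
    unfolding F_def by (rule rigidity_along_birkhoff_pair[OF finite_measure_axioms T C3 C4 W_sets f_meas that])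
  have conv: "weak_conv_measures (\<lambda>n. distr (cond_measure M (W n)) borel (F n)) P"
    using C7 by (simp add: F_def[abs_def])
  interpret asymptotically_invariant_weak_limit M T W \<alpha> F P
    by (rule asymptotically_invariant_weak_limit.intro[OF M aut erg W_sets C1 \<alpha>_pos C2 F_meas
          F_invariant conv P_prob P_sets])
  obtain B where B: "\<And>z. \<bar>\<phi> z\<bar> \<le> B" using \<phi>_bdd by (auto simp: bounded_iff)
  obtain G where G: "AE x in M. \<bar>g x\<bar> \<le> G" using g_Linf by blast
  have "(\<lambda>n. \<integral>x. indicator (W n) x * \<phi> (F n x + (h' x, h x)) * g x \<partial>M)
      \<longlonglongrightarrow> \<alpha> * (\<integral>x. (\<integral>z. \<phi> (z + (h' x, h x)) \<partial>P) * g x \<partial>M)"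
    by (rule tendsto_shifted_set_integral[OF B \<phi>_uc _ g_meas G]) measurable
  moreover have "(\<integral>x\<in>W n. \<phi> (birkhoff_sum T f (q' n) x - a' n + h' x, birkhoff_sum T f (q n) x - a n + h x) * g x \<partial>M)
      = (\<integral>x. indicator (W n) x * \<phi> (F n x + (h' x, h x)) * g x \<partial>M)" for n
    by (simp add: set_lebesgue_integral_def F_def mult.assoc)
  moreover have "(\<integral>x. (\<integral>tu. \<phi> (fst tu + h' x, snd tu + h x) * g x \<partial>P) \<partial>M)
      = (\<integral>x. (\<integral>z. \<phi> (z + (h' x, h x)) \<partial>P) * g x \<partial>M)"
    by (simp add: plus_prod_def case_prod_beta')
  ultimately show ?thesis by simp
qed

end
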